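(* Let $\alpha\in(0,2)$ and let $\omega$ be a positive continuous function on $\mathbb R^d$ with $\lim_{|x|\to\infty}\omega(x)=\infty$. Suppose there is $C_0>0$ such that $$\int\big(f(x)-\mu_V(f)\big)^2\omega(x)\,\mu_V(dx)\le C_0D_{\alpha,V}(f,f)\quad\text{for all } f\in C_b^\infty(\mathbb R^d).$$ Then there is a constant $C_1>0$ such that the super Poincaré inequality $$\mu_V(f^2)\le rD_{\alpha,V}(f,f)+\beta(r)\mu_V(|f|)^2,\qquad r>0,\ f\in C_b^\infty(\mathbb R^d)$$ holds with $$\beta(r)=\inf\Big\{C_1H(t)^{2+d/\alpha}h(t)^{-1-d/\alpha}\big(1+s^{-d/\alpha}\big):\ \frac{2C_0}{\inf_{|x|\ge t}\omega(x)}+s\le r,\ t>1,\ s>0\Big\}.$$ In particular, there are $r_0>0$ and $C_2>0$ such that for all $0<r\le r_0$, $$\beta(r)\le C_2\Big(1+r^{-d/\alpha}\big(h(\kappa(4C_0r^{-1}))\big)^{-1-d/\alpha}\big(H(\kappa(4C_0r^{-1}))\big)^{2+d/\alpha}\Big).$$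
   Context: Let $d\ge1$. $V:\mathbb R^d\to\mathbb R$ is a locally bounded measurable function such that $e^{-V}$ is bounded and $\int e^{-V(x)}dx<\infty$; $\mu_V(dx)=\frac{e^{-V(x)}}{\int e^{-V(y)}dy}dx$, and $\mu_V(f)=\int f\,d\mu_V$. $C_b^\infty(\mathbb R^d)$ is the set of smooth functions on $\mathbb R^d$ that are bounded together with all their derivatives. $D_{\alpha,V}(f,f):=\iint\frac{(f(y)-f(x))^2}{|y-x|^{d+\alpha}}\,dy\,\mu_V(dx)$. For $r>0$: $h(r):=\inf_{|x|\le r}e^{V(x)}$, $H(r):=\sup_{|x|\le r}e^{V(x)}$, and $\kappa(r):=\inf\{s>0:\ \inf_{|x|\ge s}\omega(x)\ge r\}$. *)

theory Defs
  imports "HOL-Analysis.Analysis"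
begin

text \<open>R^d is modelled by an arbitrary Euclidean space type 'a, with d = DIM('a) \<ge> 1.\<close>

text \<open>C_b^\<infinity>: smooth functions bounded together with all their (iterated partial) derivatives.\<close>
coinductive Cb_inf :: "('a::euclidean_space \<Rightarrow> real) \<Rightarrow> bool" where
  "bounded (range f) \<Longrightarrow> (\<And>x. (f has_derivative f' x) (at x))
   \<Longrightarrow> (\<And>i. i \<in> Basis \<Longrightarrow> Cb_inf (\<lambda>x. f' x i)) \<Longrightarrow> Cb_inf f"

definition ZV :: "('a::euclidean_space \<Rightarrow> real) \<Rightarrow> real" where
  "ZV V = (\<integral>y. exp (- V y) \<partial>lborel)"

definition muV :: "('a::euclidean_space \<Rightarrow> real) \<Rightarrow> 'a measure" where
  "muV V = density lborel (\<lambda>x. ennreal (exp (- V x) / ZV V))"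

definition muV_int :: "('a::euclidean_space \<Rightarrow> real) \<Rightarrow> ('a \<Rightarrow> real) \<Rightarrow> real" where
  "muV_int V f = (\<integral>x. f x \<partial>muV V)"

definition DaV :: "real \<Rightarrow> ('a::euclidean_space \<Rightarrow> real) \<Rightarrow> ('a \<Rightarrow> real) \<Rightarrow> real" where
  "DaV \<alpha> V f = (\<integral>x. (\<integral>y. (f y - f x)\<^sup>2 / norm (y - x) powr (real DIM('a) + \<alpha>) \<partial>lborel) \<partial>muV V)"

definition hV :: "('a::euclidean_space \<Rightarrow> real) \<Rightarrow> real \<Rightarrow> real" where
  "hV V r = (INF x\<in>cball 0 r. exp (V x))"

definition HV :: "('a::euclidean_space \<Rightarrow> real) \<Rightarrow> real \<Rightarrow> real" where
  "HV V r = (SUP x\<in>cball 0 r. exp (V x))"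

definition omega_inf :: "('a::euclidean_space \<Rightarrow> real) \<Rightarrow> real \<Rightarrow> real" where
  "omega_inf \<omega> t = (INF x\<in>{x. norm x \<ge> t}. \<omega> x)"

definition kappa :: "('a::euclidean_space \<Rightarrow> real) \<Rightarrow> real \<Rightarrow> real" where
  "kappa \<omega> r = Inf {s. s > 0 \<and> omega_inf \<omega> s \<ge> r}"

definition beta_fun :: "real \<Rightarrow> ('a::euclidean_space \<Rightarrow> real) \<Rightarrow> ('a \<Rightarrow> real) \<Rightarrow> real \<Rightarrow> real \<Rightarrow> real \<Rightarrow> real" where
  "beta_fun \<alpha> V \<omega> C0 C1 r = Inf {C1 * HV V t powr (2 + real DIM('a) / \<alpha>) * hV V t powr (-1 - real DIM('a) / \<alpha>)
          * (1 + s powr (- real DIM('a) / \<alpha>)) | t s.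
       2 * C0 / omega_inf \<omega> t + s \<le> r \<and> t > 1 \<and> s > 0}"

end

theory Submission
  imports Defs
begin

text \<open>
  Fix an admissible pair \<open>(t, s)\<close>, i.e. \<open>t > 1\<close>, \<open>s > 0\<close> and \<open>2 C\<^sub>0 / \<omega>\<^sub>t + s \<le> r\<close>, and
  split \<open>\<mu>\<^sub>V(f\<^sup>2)\<close> into the part on the ball \<open>B = cball 0 t\<close> and the tail outside it.
  \<^item> Tail: there \<open>\<omega> \<ge> \<omega>\<^sub>t\<close>, so the weighted Poincare inequality bounds the tail by
    \<open>2 C\<^sub>0 D / \<omega>\<^sub>t + 2 \<mu>\<^sub>V(|f|)\<^sup>2\<close>.
  \<^item> Ball: for Lebesgue measure, averaging \<open>f\<close> over a ball of radius \<open>\<epsilon>/2\<close> near each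
    \<open>x \<in> B\<close> (Cauchy--Schwarz, then Tonelli) gives
    \<open>\<integral>\<^sub>B f\<^sup>2 \<le> c \<epsilon>^\<alpha> \<integral>\<^sub>B \<Gamma>(f) + c' \<epsilon>^(-d) (\<integral>\<^sub>B |f|)\<^sup>2\<close> with \<open>\<Gamma>(f)\<close> the fractional energy density,
    which is bounded for \<open>C\<^sub>b\<^sup>\<infinity>\<close> functions (dyadic shell decomposition of the kernel).
    On \<open>B\<close> the density of \<open>\<mu>\<^sub>V\<close> is comparable to a constant via \<open>h(t)\<close>, \<open>H(t)\<close>, and a
    suitable choice of \<open>\<epsilon>\<close> turns the energy coefficient into \<open>s\<close>.
  Adding both parts gives the inequality with \<open>C\<^sub>1 \<beta>-weight(t, s)\<close>; taking the infimum over
  admissible pairs gives \<open>\<beta>(r)\<close>.  For small \<open>r\<close> the pair \<open>(\<kappa>(4 C\<^sub>0/r), r/2)\<close> is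
  admissible, which yields the explicit bound on \<open>\<beta>(r)\<close>.
\<close>

text \<open>A function of class C_b^\<infinity> is bounded, globally Lipschitz (its partial derivatives are
  bounded, hence so is the operator norm of its derivative) and continuous.\<close>
lemma Cb_inf_bounded_Lipschitz:
  fixes f :: "'a::euclidean_space \<Rightarrow> real"
  assumes "Cb_inf f"
  shows "\<exists>M L. (\<forall>x. \<bar>f x\<bar> \<le> M) \<and> (\<forall>x y. \<bar>f x - f y\<bar> \<le> L * norm (x - y))
     \<and> continuous_on UNIV f"
proof -
  from assms obtain f' where bf: "bounded (range f)" and der: "\<And>x. (f has_derivative f' x) (at x)"
    and cb: "\<And>i. i \<in> Basis \<Longrightarrow> Cb_inf (\<lambda>x. f' x i)"
    by (cases rule: Cb_inf.cases) auto
  have "\<forall>i\<in>Basis. \<exists>B. \<forall>x. \<bar>f' x i\<bar> \<le> B"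
  proof
    fix i :: 'a assume "i \<in> Basis"
    from cb[OF this] have "bounded (range (\<lambda>x. f' x i))" by (cases rule: Cb_inf.cases) auto
    then show "\<exists>B. \<forall>x. \<bar>f' x i\<bar> \<le> B" by (auto simp: bounded_iff)
  qed
  then obtain B where B: "\<And>i x. i \<in> Basis \<Longrightarrow> \<bar>f' x i\<bar> \<le> B i" by metis
  define L where "L = (\<Sum>i\<in>Basis. \<bar>B i\<bar>)"
  have onorm_bound: "onorm (f' x) \<le> L" for x
  proof (rule onorm_le)
    fix v :: 'a
    have lin: "linear (f' x)" using der[of x] by (simp add: has_derivative_def bounded_linear.linear)
    have "f' x v = f' x (\<Sum>i\<in>Basis. (v \<bullet> i) *\<^sub>R i)" by (simp add: euclidean_representation)
    also have "\<dots> = (\<Sum>i\<in>Basis. (v \<bullet> i) * f' x i)"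
      by (simp add: linear_sum[OF lin] linear_scale[OF lin])
    finally have "\<bar>f' x v\<bar> \<le> (\<Sum>i\<in>Basis. \<bar>v \<bullet> i\<bar> * \<bar>f' x i\<bar>)"
      by (metis (no_types, lifting) abs_mult sum_abs sum.cong)
    also have "\<dots> \<le> (\<Sum>i\<in>Basis. norm v * \<bar>B i\<bar>)"
      by (intro sum_mono mult_mono) (auto simp: Basis_le_norm intro: order_trans[OF B abs_ge_self])
    also have "\<dots> = L * norm v" by (simp add: L_def sum_distrib_left mult.commute)
    finally show "norm (f' x v) \<le> L * norm v" by simp
  qed
  have lip: "\<bar>f x - f y\<bar> \<le> L * norm (x - y)" for x y
    using differentiable_bound[of UNIV f f' L x y] der onorm_bound by simp
  from bf obtain M where M: "\<And>x. \<bar>f x\<bar> \<le> M" by (auto simp: bounded_iff)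
  have "continuous_on UNIV f"
    using der by (meson continuous_at_imp_continuous_on has_derivative_continuous)
  with lip M show ?thesis by blast
qed

lemma dyadic_shell_small:
  fixes r :: real assumes r: "0 < r" "r \<le> 1"
  shows "\<exists>n. (1/2)^(n+1) < r \<and> r \<le> (1/2)^n"
proof -
  obtain n0 where "(1/2::real)^n0 < r" using real_arch_pow_inv[OF r(1), of "1/2"] by auto
  moreover have "(1/2::real)^(n0+1) \<le> (1/2)^n0" by (rule power_decreasing) auto
  ultimately have ex: "\<exists>n. (1/2::real)^(n+1) < r" by (meson le_less_trans)
  define n where "n = (LEAST n. (1/2::real)^(n+1) < r)"
  have n1: "(1/2::real)^(n+1) < r" unfolding n_def by (rule LeastI_ex[OF ex])
  have "r \<le> (1/2)^n"
  proof (cases n)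
    case 0 thus ?thesis using r by simp
  next
    case (Suc m)
    then have "\<not> (1/2::real)^(m+1) < r" unfolding n_def by (intro not_less_Least) simp
    thus ?thesis using Suc by simp
  qed
  with n1 show ?thesis by blast
qed

lemma dyadic_shell_large:
  fixes r :: real assumes r: "1 < r"
  shows "\<exists>n. 2^n \<le> r \<and> r < (2::real)^(n+1)"
proof -
  obtain n where n: "(1/2)^(n+1) < 1/r" "1/r \<le> (1/2::real)^n"
    using dyadic_shell_small[of "1/r"] r by auto
  have "2^n \<le> r" using n(2) r by (simp add: power_one_over field_simps)
  moreover have "r < 2^(n+1)" using n(1) r by (simp add: power_one_over field_simps del: power_Suc)
  ultimately show ?thesis by blast
qed

lemma frac_kernel_small_shell:
  fixes u r p L :: real
  assumes lip: "\<bar>u\<bar> \<le> L * r" and shell: "(1/2)^(n+1) < r" "r \<le> (1/2)^n"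
  shows "u\<^sup>2 / r powr p \<le> L\<^sup>2 * (1 + ((1/2)^(n+1)) powr (2 - p))"
proof -
  have r0: "r > 0" using shell(1) by (meson less_trans zero_less_power zero_less_divide_1_iff zero_less_numeral)
  have "(1/2::real)^n \<le> 1" by (rule power_le_one) auto
  then have r1: "r \<le> 1" using shell(2) by linarith
  have rq: "r powr (2 - p) \<le> 1 + ((1/2::real)^(n+1)) powr (2 - p)"
  proof (cases "2 - p \<ge> 0")
    case True
    then have "r powr (2 - p) \<le> 1" using r0 r1 by (intro powr_le1) auto
    then show ?thesis using powr_ge_zero[of "(1/2::real)^(n+1)" "2 - p"] by linarith
  next
    case False
    then have "r powr (2 - p) \<le> ((1/2::real)^(n+1)) powr (2 - p)"
      using shell by (intro powr_mono2') auto
    then show ?thesis by simp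
  qed
  have "u\<^sup>2 \<le> (L * r)\<^sup>2" using power_mono[OF lip abs_ge_zero, of 2] by simp
  then have "u\<^sup>2 / r powr p \<le> L\<^sup>2 * r\<^sup>2 / r powr p"
    by (intro divide_right_mono) (simp_all add: power_mult_distrib)
  also have "L\<^sup>2 * r\<^sup>2 / r powr p = L\<^sup>2 * r powr (2 - p)"
    using r0 by (simp add: powr_diff powr_numeral)
  also have "\<dots> \<le> L\<^sup>2 * (1 + ((1/2)^(n+1)) powr (2 - p))" using rq by (simp add: mult_left_mono)
  finally show ?thesis .
qed

lemma frac_kernel_large_shell:
  fixes u r p M :: real
  assumes bdd: "\<bar>u\<bar> \<le> 2 * M" and shell: "2^n \<le> r" and p: "p \<ge> 0"
  shows "u\<^sup>2 / r powr p \<le> 4 * M\<^sup>2 * ((2::real)^n) powr (-p)"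
proof -
  have "u\<^sup>2 \<le> (2*M)\<^sup>2" using power_mono[OF bdd abs_ge_zero, of 2] by simp
  then have "u\<^sup>2 / r powr p \<le> 4*M\<^sup>2 / r powr p"
    by (intro divide_right_mono) (simp_all add: power_mult_distrib)
  also have "\<dots> \<le> 4*M\<^sup>2 / ((2::real)^n) powr p"
  proof (rule divide_left_mono)
    have "(0::real) < 2^n" by simp
    then show "((2::real)^n) powr p \<le> r powr p" using shell p by (intro powr_mono2) auto
    have "r > 0" using shell \<open>(0::real) < 2^n\<close> by linarith
    then show "0 < r powr p * ((2::real)^n) powr p" by simp
  qed simp
  finally show ?thesis by (simp add: powr_minus_divide)
qed

text \<open>The Lebesgue masses of the dyadic balls, weighted by the shell bounds above, are summable
  as soon as the kernel exponent \<open>p\<close> satisfies \<open>d < p < d + 2\<close>.\<close>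
lemma summable_small_shell_masses:
  fixes q C :: real and d :: nat
  assumes d: "d \<ge> 1" and q: "q + d > 0"
  shows "summable (\<lambda>n. C * (1 + ((1/2::real)^(n+1)) powr q) * ((1/2)^n)^d)"
proof -
  have geo: "((1/2::real)^n)^d * ((1/2)^(n+1)) powr q = (1/2) powr q * ((1/2) powr (q + d))^n" for n
  proof -
    have "((1/2::real)^n)^d = (1/2) powr (real n * real d)"
      by (simp add: powr_realpow[symmetric] powr_powr power_mult[symmetric] mult.commute)
    moreover have "((1/2::real)^(n+1)) powr q = (1/2) powr ((real n + 1) * q)"
    proof -
      have e: "(1/2::real) powr (real (n+1)) = (1/2)^(n+1)" by (rule powr_realpow) simp
      show ?thesis unfolding e[symmetric] powr_powr by (simp add: add.commute)
    qed
    moreover have "((1/2::real) powr (q + d))^n = (1/2) powr ((q+d) * real n)"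
      by (simp add: powr_realpow[symmetric] powr_powr)
    ultimately show ?thesis by (simp add: powr_add[symmetric] algebra_simps)
  qed
  have eq: "C * (1 + ((1/2::real)^(n+1)) powr q) * ((1/2)^n)^d
      = C * ((1/2)^d)^n + C * (1/2) powr q * ((1/2) powr (q + d))^n" for n
    using geo[of n] by (simp add: algebra_simps power_mult[symmetric] mult.commute[of n d])
  have "(1/2::real) powr (q + d) < 1" using q by (subst powr01_less_one) auto
  moreover have "(1/2::real)^d < 1" using d by (simp add: power_less_one_iff)
  ultimately show ?thesis unfolding eq
    by (intro summable_add summable_mult summable_geometric) auto
qed

lemma summable_large_shell_masses:
  fixes p C :: real and d :: nat
  assumes p: "p > d"
  shows "summable (\<lambda>n. C * ((2::real)^n) powr (-p) * (2^(n+1))^d)"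
proof -
  have eq: "C * ((2::real)^n) powr (-p) * (2^(n+1))^d = C * 2^d * ((2::real) powr (d - p))^n" for n
  proof -
    have "((2::real)^n) powr (-p) = 2 powr (real n * (-p))"
      by (simp add: powr_realpow[symmetric] powr_powr)
    moreover have "((2::real)^n)^d = 2 powr (real n * real d)"
      by (simp add: powr_realpow[symmetric] powr_powr power_mult[symmetric] mult.commute)
    moreover have "((2::real) powr (d - p))^n = 2 powr ((d - p) * real n)"
      by (simp add: powr_realpow[symmetric] powr_powr)
    ultimately have "((2::real)^n) powr (-p) * (2^n)^d = ((2::real) powr (d - p))^n"
      by (simp add: powr_add[symmetric] algebra_simps)
    then show ?thesis by (simp add: algebra_simps power_mult_distrib)
  qed
  have "(2::real) powr (d - p) < 1" using p by (intro powr_less_one) auto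
  then show ?thesis unfolding eq by (intro summable_mult summable_geometric) auto
qed

lemma cball_sets_borel[measurable]: "cball (x::'a::euclidean_space) r \<in> sets borel"
  by (simp add: borel_closed)

lemma nn_integral_ball_series:
  fixes x :: "'a::euclidean_space"
  assumes c: "\<And>n. c n \<ge> 0" and \<rho>: "\<And>n. \<rho> n \<ge> 0"
  shows "(\<integral>\<^sup>+y. (\<Sum>n. ennreal (c n) * indicator (cball x (\<rho> n)) y) \<partial>lborel)
       = (\<Sum>n. ennreal (c n * (unit_ball_vol DIM('a) * \<rho> n ^ DIM('a))))"
proof -
  have "(\<integral>\<^sup>+y. (\<Sum>n. ennreal (c n) * indicator (cball x (\<rho> n)) y) \<partial>lborel)
     = (\<Sum>n. \<integral>\<^sup>+y. ennreal (c n) * indicator (cball x (\<rho> n)) y \<partial>lborel)"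
    by (rule nn_integral_suminf) measurable
  also have "\<dots> = (\<Sum>n. ennreal (c n * (unit_ball_vol DIM('a) * \<rho> n ^ DIM('a))))"
    by (rule suminf_cong) (simp add: nn_integral_cmult_indicator emeasure_cball ennreal_mult' c \<rho>)
  finally show ?thesis .
qed

lemma ennreal_term_le_suminf: "F n \<le> (\<Sum>n. F n :: ennreal)"
  using sum_le_suminf[of F "{n}"] by simp

lemma frac_kernel_dyadic_majorant:
  fixes f :: "'a::euclidean_space \<Rightarrow> real"
  assumes M: "\<And>x. \<bar>f x\<bar> \<le> M" and Lip: "\<And>x y. \<bar>f x - f y\<bar> \<le> L * norm (x - y)" and p: "p \<ge> 0"
  shows "ennreal ((f y - f x)\<^sup>2 / norm (y - x) powr p)
     \<le> (\<Sum>n. ennreal (L\<^sup>2 * (1 + ((1/2::real)^(n+1)) powr (2 - p))) * indicator (cball x ((1/2)^n)) y)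
       + (\<Sum>n. ennreal (4*M\<^sup>2 * ((2::real)^n) powr (-p)) * indicator (cball x (2^(n+1))) y)"
    (is "_ \<le> ?S1 + ?S2")
proof -
  define r where "r = norm (y - x)"
  have dxy: "dist x y = r" unfolding r_def by (simp add: dist_norm norm_minus_commute)
  consider "r = 0" | "0 < r" "r \<le> 1" | "1 < r" unfolding r_def by fastforce
  then show ?thesis
  proof cases
    case 1 then show ?thesis unfolding r_def by simp
  next
    case 2
    then obtain n where n: "(1/2)^(n+1) < r" "r \<le> (1/2)^n" using dyadic_shell_small by blast
    have "(f y - f x)\<^sup>2 / r powr p \<le> L\<^sup>2 * (1 + ((1/2::real)^(n+1)) powr (2 - p))"
      using frac_kernel_small_shell[OF _ n] Lip[of y x] by (simp add: r_def)
    then have "ennreal ((f y - f x)\<^sup>2 / norm (y - x) powr p)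
        \<le> ennreal (L\<^sup>2 * (1 + ((1/2::real)^(n+1)) powr (2 - p))) * indicator (cball x ((1/2)^n)) y"
      using n dxy by (simp add: r_def[symmetric] ennreal_leI)
    also have "\<dots> \<le> ?S1" by (rule ennreal_term_le_suminf)
    finally show ?thesis by (simp add: add_increasing2)
  next
    case 3
    then obtain n where n: "2^n \<le> r" "r < (2::real)^(n+1)" using dyadic_shell_large by blast
    have "\<bar>f y - f x\<bar> \<le> 2 * M" using M[of x] M[of y] by linarith
    then have "(f y - f x)\<^sup>2 / r powr p \<le> 4*M\<^sup>2 * ((2::real)^n) powr (-p)"
      using frac_kernel_large_shell[of "f y - f x" M n r p] n(1) p by simp
    then have "ennreal ((f y - f x)\<^sup>2 / norm (y - x) powr p)
        \<le> ennreal (4*M\<^sup>2 * ((2::real)^n) powr (-p)) * indicator (cball x (2^(n+1))) y"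
      using n dxy by (simp add: r_def[symmetric] ennreal_leI)
    also have "\<dots> \<le> ?S2" by (rule ennreal_term_le_suminf)
    finally show ?thesis by (simp add: add_increasing)
  qed
qed

text \<open>For a bounded Lipschitz function and \<open>0 < \<alpha> < 2\<close>, the fractional kernel integral
  \<open>\<Gamma>(f)(x) = \<integral> (f y - f x)\<^sup>2 / |y - x|^(d+\<alpha>) dy\<close> is bounded uniformly in \<open>x\<close>: integrate the
  dyadic majorant, whose ball masses form two convergent geometric-type series.\<close>
lemma frac_kernel_integral_bounded:
  fixes f :: "'a::euclidean_space \<Rightarrow> real"
  assumes M: "\<And>x. \<bar>f x\<bar> \<le> M" and Lip: "\<And>x y. \<bar>f x - f y\<bar> \<le> L * norm (x - y)"
    and \<alpha>: "0 < \<alpha>" "\<alpha> < 2"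
  shows "\<exists>K. \<forall>x. (\<integral>\<^sup>+y. ennreal ((f y - f x)\<^sup>2 / norm (y - x) powr (real DIM('a) + \<alpha>)) \<partial>lborel) \<le> ennreal K"
proof -
  define d where "d = DIM('a)"
  define p where "p = real d + \<alpha>"
  define w where "w = unit_ball_vol (real d)"
  define c where "c n = L\<^sup>2 * (1 + ((1/2::real)^(n+1)) powr (2 - p))" for n :: nat
  define e where "e n = 4*M\<^sup>2 * ((2::real)^n) powr (-p)" for n :: nat
  have c0: "c n \<ge> 0" and e0: "e n \<ge> 0" for n unfolding c_def e_def by simp_all
  define a where "a n = c n * (w * ((1/2::real)^n)^d)" for n :: nat
  define b where "b n = e n * (w * ((2::real)^(n+1))^d)" for n :: nat
  have a0: "a n \<ge> 0" and b0: "b n \<ge> 0" for n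
    unfolding a_def b_def w_def using c0 e0 by simp_all
  have sa: "summable a"
    using summable_small_shell_masses[of d "2 - p" "L\<^sup>2 * w"] \<alpha>
    unfolding a_def c_def d_def p_def by (simp add: DIM_positive Suc_le_eq mult_ac)
  have sb: "summable b"
    using summable_large_shell_masses[of d p "4*M\<^sup>2 * w"] \<alpha>
    unfolding b_def e_def p_def by (simp add: mult_ac)
  have "(\<integral>\<^sup>+y. ennreal ((f y - f x)\<^sup>2 / norm (y - x) powr p) \<partial>lborel) \<le> ennreal (suminf a + suminf b)" for x
  proof -
    define S1 where "S1 y = (\<Sum>n. ennreal (c n) * indicator (cball x ((1/2)^n)) y)" for y
    define S2 where "S2 y = (\<Sum>n. ennreal (e n) * indicator (cball x (2^(n+1))) y)" for y
    have "(\<integral>\<^sup>+y. ennreal ((f y - f x)\<^sup>2 / norm (y - x) powr p) \<partial>lborel) \<le> (\<integral>\<^sup>+y. S1 y + S2 y \<partial>lborel)"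
      unfolding S1_def S2_def c_def e_def using \<alpha>
      by (intro nn_integral_mono frac_kernel_dyadic_majorant[OF M Lip]) (simp add: p_def)
    also have "\<dots> = (\<integral>\<^sup>+y. S1 y \<partial>lborel) + (\<integral>\<^sup>+y. S2 y \<partial>lborel)"
      unfolding S1_def S2_def by (rule nn_integral_add) measurable
    also have "\<dots> = (\<Sum>n. ennreal (a n)) + (\<Sum>n. ennreal (b n))"
      unfolding S1_def S2_def a_def b_def w_def d_def
      by (simp add: nn_integral_ball_series c0 e0 mult_ac)
    also have "\<dots> = ennreal (suminf a + suminf b)"
      using a0 b0 sa sb by (simp add: suminf_ennreal2 suminf_nonneg ennreal_plus)
    finally show ?thesis .
  qed
  then show ?thesis unfolding p_def d_def by blast
qed

definition frac_energy :: "real \<Rightarrow> ('a::euclidean_space \<Rightarrow> real) \<Rightarrow> 'a \<Rightarrow> real" where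
  "frac_energy \<alpha> f x = (\<integral>y. (f y - f x)\<^sup>2 / norm (y - x) powr (real DIM('a) + \<alpha>) \<partial>lborel)"

lemma DaV_frac_energy: "DaV \<alpha> V f = (\<integral>x. frac_energy \<alpha> f x \<partial>muV V)"
  unfolding DaV_def frac_energy_def ..

lemma frac_energy_measurable[measurable]:
  fixes f :: "'a::euclidean_space \<Rightarrow> real"
  assumes [measurable]: "f \<in> borel_measurable borel"
  shows "frac_energy \<alpha> f \<in> borel_measurable borel"
proof -
  have [measurable]: "(\<lambda>(x, y). (f y - f x)\<^sup>2 / norm (y - x) powr (real DIM('a) + \<alpha>))
      \<in> borel_measurable (borel \<Otimes>\<^sub>M lborel)" by measurable
  show ?thesis unfolding frac_energy_def by measurable
qed

lemma frac_energy_bounded: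
  fixes f :: "'a::euclidean_space \<Rightarrow> real"
  assumes fm[measurable]: "f \<in> borel_measurable borel" and M: "\<And>x. \<bar>f x\<bar> \<le> M"
    and Lip: "\<And>x y. \<bar>f x - f y\<bar> \<le> L * norm (x - y)" and \<alpha>: "0 < \<alpha>" "\<alpha> < 2"
  shows "\<exists>K. \<forall>x. integrable lborel (\<lambda>y. (f y - f x)\<^sup>2 / norm (y - x) powr (real DIM('a) + \<alpha>))
              \<and> 0 \<le> frac_energy \<alpha> f x \<and> frac_energy \<alpha> f x \<le> K"
proof -
  define k where "k x y = (f y - f x)\<^sup>2 / norm (y - x) powr (real DIM('a) + \<alpha>)" for x y :: 'a
  obtain K where K: "\<And>x. (\<integral>\<^sup>+y. ennreal (k x y) \<partial>lborel) \<le> ennreal K"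
    using frac_kernel_integral_bounded[OF M Lip \<alpha>] unfolding k_def by blast
  have k0: "k x y \<ge> 0" for x y unfolding k_def by simp
  have [measurable]: "k x \<in> borel_measurable lborel" for x unfolding k_def by measurable
  have kint: "integrable lborel (k x)" for x
  proof (rule integrableI_bounded)
    have "(\<integral>\<^sup>+y. ennreal (norm (k x y)) \<partial>lborel) \<le> ennreal K" using K[of x] k0 by simp
    also have "\<dots> < \<infinity>" by simp
    finally show "(\<integral>\<^sup>+y. ennreal (norm (k x y)) \<partial>lborel) < \<infinity>" .
  qed simp
  have "0 \<le> frac_energy \<alpha> f x \<and> frac_energy \<alpha> f x \<le> max K 0" for x
  proof -
    have E: "frac_energy \<alpha> f x = (\<integral>y. k x y \<partial>lborel)" unfolding frac_energy_def k_def ..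
    have nonneg: "0 \<le> frac_energy \<alpha> f x" unfolding E by (rule integral_nonneg_AE) (simp add: k0)
    have "ennreal (frac_energy \<alpha> f x) = (\<integral>\<^sup>+y. ennreal (k x y) \<partial>lborel)"
      unfolding E by (rule nn_integral_eq_integral[symmetric]) (auto simp: kint k0)
    then have "ennreal (frac_energy \<alpha> f x) \<le> ennreal K" using K[of x] by simp
    then show ?thesis using nonneg by (auto simp: ennreal_le_iff2)
  qed
  then show ?thesis using kint unfolding k_def by blast
qed

lemma integrable_indicator_bounded:
  fixes h :: "'a::euclidean_space \<Rightarrow> real"
  assumes [measurable]: "h \<in> borel_measurable borel" "S \<in> sets borel"
    and "bounded S" and B: "\<And>x. x \<in> S \<Longrightarrow> \<bar>h x\<bar> \<le> B"
  shows "integrable lborel (\<lambda>x. indicator S x * h x)"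
proof (rule integrableI_bounded_set[where A=S and B=B])
  show "emeasure lborel S < \<infinity>" using assms(3) by (rule emeasure_bounded_finite)
qed (use B in \<open>auto simp: indicator_def\<close>)

text \<open>Cauchy--Schwarz on a set of finite measure \<open>a\<close>: \<open>(\<integral>\<^sub>A u)\<^sup>2 \<le> a \<integral>\<^sub>A u\<^sup>2\<close>, from the
  nonnegativity of \<open>\<integral>\<^sub>A (u - c)\<^sup>2\<close> with \<open>c\<close> the mean of \<open>u\<close> on \<open>A\<close>.\<close>
lemma set_integral_Cauchy_Schwarz:
  fixes u :: "'a::euclidean_space \<Rightarrow> real"
  assumes [measurable]: "A \<in> sets borel" and mA: "measure lborel A = a" "a > 0" "emeasure lborel A < \<infinity>"
    and i1: "integrable lborel (\<lambda>y. indicator A y * u y)"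
    and i2: "integrable lborel (\<lambda>y. indicator A y * (u y)\<^sup>2)"
  shows "(\<integral>y. indicator A y * u y \<partial>lborel)\<^sup>2 \<le> a * (\<integral>y. indicator A y * (u y)\<^sup>2 \<partial>lborel)"
proof -
  define s1 where "s1 = (\<integral>y. indicator A y * u y \<partial>lborel)"
  define s2 where "s2 = (\<integral>y. indicator A y * (u y)\<^sup>2 \<partial>lborel)"
  define c where "c = s1 / a"
  have i3: "integrable lborel (indicator A :: 'a \<Rightarrow> real)"
    using mA by (intro integrable_real_indicator) auto
  have eq: "(\<lambda>y. indicator A y * (u y - c)\<^sup>2) = (\<lambda>y. indicator A y * (u y)\<^sup>2 - (2*c) * (indicator A y * u y) + c\<^sup>2 * indicator A y)"
    by (auto simp: indicator_def power2_diff algebra_simps)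
  have "0 \<le> (\<integral>y. indicator A y * (u y - c)\<^sup>2 \<partial>lborel)"
    by (rule integral_nonneg_AE) (auto simp: indicator_def)
  also have "\<dots> = s2 - (2*c) * s1 + c\<^sup>2 * a"
    unfolding eq s1_def s2_def using i1 i2 i3 mA by simp
  also have "\<dots> = s2 - s1\<^sup>2 / a" unfolding c_def using mA by (simp add: power2_eq_square field_simps)
  finally have "s1\<^sup>2 / a \<le> s2" by simp
  then show ?thesis unfolding s1_def[symmetric] s2_def[symmetric] using mA by (simp add: field_simps)
qed

lemma local_oscillation_le_kernel:
  fixes f :: "'a::euclidean_space \<Rightarrow> real"
  assumes [measurable]: "f \<in> borel_measurable borel" "A \<in> sets borel"
    and near: "\<And>y. y \<in> A \<Longrightarrow> norm (y - x) \<le> \<epsilon>" and p: "p \<ge> 0"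
    and kint: "integrable lborel (\<lambda>y. (f y - f x)\<^sup>2 / norm (y - x) powr p)"
    and iA: "integrable lborel (\<lambda>y. indicator A y * (\<bar>f x - f y\<bar>)\<^sup>2)"
  shows "(\<integral>y. indicator A y * (\<bar>f x - f y\<bar>)\<^sup>2 \<partial>lborel)
       \<le> \<epsilon> powr p * (\<integral>y. (f y - f x)\<^sup>2 / norm (y - x) powr p \<partial>lborel)"
proof -
  have "(\<integral>y. indicator A y * (\<bar>f x - f y\<bar>)\<^sup>2 \<partial>lborel)
      \<le> (\<integral>y. \<epsilon> powr p * ((f y - f x)\<^sup>2 / norm (y - x) powr p) \<partial>lborel)"
  proof (rule integral_mono[OF iA])
    show "integrable lborel (\<lambda>y. \<epsilon> powr p * ((f y - f x)\<^sup>2 / norm (y - x) powr p))"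
      using integrable_mult_right[OF kint, of "\<epsilon> powr p"] by simp
    fix y
    show "indicator A y * (\<bar>f x - f y\<bar>)\<^sup>2 \<le> \<epsilon> powr p * ((f y - f x)\<^sup>2 / norm (y - x) powr p)"
    proof (cases "y \<in> A \<and> y \<noteq> x")
      case True
      have r0: "norm (y - x) > 0" using True by simp
      have "norm (y - x) powr p \<le> \<epsilon> powr p" using near True p by (intro powr_mono2) auto
      then have "1 \<le> \<epsilon> powr p / norm (y - x) powr p" using r0 by simp
      then have "(f y - f x)\<^sup>2 * 1 \<le> (f y - f x)\<^sup>2 * (\<epsilon> powr p / norm (y - x) powr p)"
        by (intro mult_left_mono) auto
      then show ?thesis using True by (simp add: power2_commute mult.commute)
    qed (auto simp: indicator_def)
  qed
  then show ?thesis by (simp only: integral_mult_right_zero)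
qed

text \<open>The arithmetic of the averaging argument: from \<open>a|f x| \<le> s\<^sub>1 + v\<close> (triangle
  inequality), \<open>s\<^sub>1\<^sup>2 \<le> a s\<^sub>2\<close> (Cauchy--Schwarz), \<open>s\<^sub>2 \<le> E\<close> and \<open>0 \<le> v \<le> F\<close>.\<close>
lemma average_bound_arith:
  fixes a fx s1 s2 v E F :: real
  assumes a: "a > 0" and tri: "a * \<bar>fx\<bar> \<le> s1 + v" and cs: "s1\<^sup>2 \<le> a * s2"
    and E: "s2 \<le> E" and F: "v \<le> F" and v0: "v \<ge> 0" and s10: "s1 \<ge> 0"
  shows "fx\<^sup>2 \<le> 2 * E / a + 2 * F / a\<^sup>2 * v"
proof -
  have "\<bar>fx\<bar> \<le> (s1 + v) / a" using tri a by (simp add: field_simps)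
  then have "fx\<^sup>2 \<le> ((s1 + v) / a)\<^sup>2" using power_mono[of "\<bar>fx\<bar>" _ 2] by simp
  also have "\<dots> \<le> 2 * (s1\<^sup>2 / a\<^sup>2) + 2 * (v\<^sup>2 / a\<^sup>2)"
  proof -
    have "(s1 + v)\<^sup>2 \<le> 2 * s1\<^sup>2 + 2 * v\<^sup>2" using sum_squares_ge_zero[of "s1 - v" 0]
      by (simp add: power2_eq_square algebra_simps)
    then show ?thesis using a by (simp add: power_divide field_simps)
  qed
  also have "s1\<^sup>2 / a\<^sup>2 \<le> E / a"
  proof -
    have "s1\<^sup>2 \<le> a * E" using cs E a by (meson mult_left_mono less_imp_le order_trans)
    then show ?thesis using a by (simp add: field_simps power2_eq_square)
  qed
  also have "v\<^sup>2 / a\<^sup>2 \<le> F * v / a\<^sup>2"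
    using F v0 by (intro divide_right_mono) (auto simp: power2_eq_square mult_right_mono)
  finally show ?thesis by simp
qed

lemma pointwise_average_bound:
  fixes f :: "'a::euclidean_space \<Rightarrow> real" and x :: 'a
  assumes fm[measurable]: "f \<in> borel_measurable borel" and M: "\<And>y. \<bar>f y\<bar> \<le> M"
    and [measurable]: "A \<in> sets borel" "B \<in> sets borel" and bA: "bounded A" and bB: "bounded B"
    and mA: "measure lborel A = a" "a > 0" and AB: "A \<subseteq> B"
    and near: "\<And>y. y \<in> A \<Longrightarrow> norm (y - x) \<le> \<epsilon>" and p: "p \<ge> 0"
    and kint: "integrable lborel (\<lambda>y. (f y - f x)\<^sup>2 / norm (y - x) powr p)"
  shows "(f x)\<^sup>2 \<le> 2 * \<epsilon> powr p / a * (\<integral>y. (f y - f x)\<^sup>2 / norm (y - x) powr p \<partial>lborel)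
     + 2 * (\<integral>y. indicator B y * \<bar>f y\<bar> \<partial>lborel) / a\<^sup>2 * (\<integral>y. indicator A y * \<bar>f y\<bar> \<partial>lborel)"
proof -
  have eA: "emeasure lborel A < \<infinity>" using bA by (rule emeasure_bounded_finite)
  define s1 where "s1 = (\<integral>y. indicator A y * \<bar>f x - f y\<bar> \<partial>lborel)"
  define s2 where "s2 = (\<integral>y. indicator A y * (\<bar>f x - f y\<bar>)\<^sup>2 \<partial>lborel)"
  define v where "v = (\<integral>y. indicator A y * \<bar>f y\<bar> \<partial>lborel)"
  have bd: "\<bar>f x - f y\<bar> \<le> 2*M" for y using M[of x] M[of y] by arith
  have i0: "integrable lborel (\<lambda>y. indicator A y * \<bar>f x\<bar>)"
    by (rule integrable_indicator_bounded[where B="\<bar>f x\<bar>"]) (auto simp: bA)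
  have i1: "integrable lborel (\<lambda>y. indicator A y * \<bar>f x - f y\<bar>)"
    by (rule integrable_indicator_bounded[where B="2*M"]) (auto simp: bA bd)
  have i2: "integrable lborel (\<lambda>y. indicator A y * (\<bar>f x - f y\<bar>)\<^sup>2)"
  proof (rule integrable_indicator_bounded[where B="(2*M)\<^sup>2"])
    fix y show "\<bar>(\<bar>f x - f y\<bar>)\<^sup>2\<bar> \<le> (2*M)\<^sup>2" using power_mono[OF bd[of y] abs_ge_zero, of 2] by simp
  qed (auto simp: bA)
  have i3: "integrable lborel (\<lambda>y. indicator A y * \<bar>f y\<bar>)"
    by (rule integrable_indicator_bounded[where B="M"]) (auto simp: bA M)
  have i4: "integrable lborel (\<lambda>y. indicator B y * \<bar>f y\<bar>)"
    by (rule integrable_indicator_bounded[where B="M"]) (auto simp: bB M)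
  have triangle: "a * \<bar>f x\<bar> \<le> s1 + v"
  proof -
    have "a * \<bar>f x\<bar> = (\<integral>y. indicator A y * \<bar>f x\<bar> \<partial>lborel)" using mA by simp
    also have "\<dots> \<le> (\<integral>y. indicator A y * \<bar>f x - f y\<bar> + indicator A y * \<bar>f y\<bar> \<partial>lborel)"
      by (rule integral_mono[OF i0]) (use i1 i3 in \<open>auto simp: indicator_def\<close>)
    also have "\<dots> = s1 + v" unfolding s1_def v_def using i1 i3 by simp
    finally show ?thesis .
  qed
  have "s1\<^sup>2 \<le> a * s2"
    unfolding s1_def s2_def by (rule set_integral_Cauchy_Schwarz[OF _ mA eA i1 i2]) simp
  moreover have "s2 \<le> \<epsilon> powr p * (\<integral>y. (f y - f x)\<^sup>2 / norm (y - x) powr p \<partial>lborel)"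
    unfolding s2_def by (rule local_oscillation_le_kernel[OF fm _ near p kint i2]) simp_all
  moreover have "v \<le> (\<integral>y. indicator B y * \<bar>f y\<bar> \<partial>lborel)"
    unfolding v_def by (rule integral_mono[OF i3 i4]) (use AB in \<open>auto simp: indicator_def\<close>)
  moreover have "v \<ge> 0" "s1 \<ge> 0" unfolding v_def s1_def by (auto intro: integral_nonneg_AE)
  ultimately show ?thesis unfolding v_def[symmetric]
    using average_bound_arith[OF mA(2) triangle] by (simp add: mult.assoc)
qed

text \<open>The averaging ball attached to \<open>x\<close>: radius \<open>\<epsilon>/2\<close>, centred at the slightly contracted
  point \<open>(1 - \<epsilon>/(2t)) x\<close>, so that it stays inside \<open>cball 0 t\<close> whenever \<open>x\<close> does.\<close>
definition shifted_ball :: "real \<Rightarrow> real \<Rightarrow> 'a::euclidean_space \<Rightarrow> 'a set" where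
  "shifted_ball \<epsilon> t x = ball ((1 - \<epsilon>/(2*t)) *\<^sub>R x) (\<epsilon>/2)"

lemma pred_shifted_ball[measurable]:
  "Measurable.pred (borel \<Otimes>\<^sub>M borel) (\<lambda>p::'a::euclidean_space \<times> 'a. snd p \<in> shifted_ball \<epsilon> t (fst p))"
  unfolding shifted_ball_def mem_ball by measurable

lemma measure_shifted_ball:
  "\<epsilon> \<ge> 0 \<Longrightarrow> measure lborel (shifted_ball \<epsilon> t (x::'a::euclidean_space)) = unit_ball_vol DIM('a) * (\<epsilon>/2)^DIM('a)"
  unfolding shifted_ball_def by (simp add: content_ball)

lemma shifted_ball_geometry:
  fixes x y :: "'a::euclidean_space"
  assumes t: "t > 1" and \<epsilon>: "0 < \<epsilon>" "\<epsilon> \<le> 1" and x: "norm x \<le> t" and y: "y \<in> shifted_ball \<epsilon> t x"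
  shows "norm y \<le> t" and "norm (y - x) \<le> \<epsilon>" and "dist ((1 / (1 - \<epsilon>/(2*t))) *\<^sub>R y) x < \<epsilon>"
proof -
  define l where "l = 1 - \<epsilon>/(2*t)"
  have l1: "l \<ge> 1/2" "l \<le> 1" unfolding l_def using t \<epsilon> by (auto simp: field_simps)
  have y': "norm (y - l *\<^sub>R x) < \<epsilon>/2"
    using y unfolding l_def shifted_ball_def by (simp add: dist_norm norm_minus_commute)
  have "norm y \<le> norm (l *\<^sub>R x) + norm (y - l *\<^sub>R x)" by (metis norm_triangle_sub add.commute)
  also have "norm (l *\<^sub>R x) \<le> l * t" using l1 x by (simp add: mult_left_mono)
  finally have "norm y \<le> l * t + \<epsilon>/2" using y' by linarith
  also have "l * t + \<epsilon>/2 = t" unfolding l_def using t by (simp add: field_simps)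
  finally show "norm y \<le> t" .
  have "norm (y - x) \<le> norm (y - l *\<^sub>R x) + norm (l *\<^sub>R x - x)"
    by (metis norm_triangle_ineq diff_add_cancel add_diff_eq)
  also have "norm (l *\<^sub>R x - x) = (1 - l) * norm x"
  proof -
    have "l *\<^sub>R x - x = (- (1 - l)) *\<^sub>R x" by (simp add: algebra_simps)
    then show ?thesis using l1 by simp
  qed
  also have "(1 - l) * norm x \<le> (1 - l) * t" using l1 x by (intro mult_left_mono) auto
  also have "(1 - l) * t = \<epsilon>/2" unfolding l_def using t by (simp add: field_simps)
  finally show "norm (y - x) \<le> \<epsilon>" using y' by linarith
  have "(1/l) *\<^sub>R y - x = (1/l) *\<^sub>R (y - l *\<^sub>R x)" using l1 by (simp add: algebra_simps)
  then have "dist ((1/l) *\<^sub>R y) x = (1/l) * norm (y - l *\<^sub>R x)" using l1 by (simp add: dist_norm)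
  also have "\<dots> < (1/l) * (\<epsilon>/2)" using y' l1 by (intro mult_strict_left_mono) auto
  also have "\<dots> \<le> \<epsilon>" using l1 \<epsilon> by (simp add: field_simps)
  finally show "dist ((1 / (1 - \<epsilon>/(2*t))) *\<^sub>R y) x < \<epsilon>" unfolding l_def .
qed

lemma shifted_ball_centres_measure:
  fixes y :: "'a::euclidean_space" and c :: real
  assumes t: "t > 1" and \<epsilon>: "0 < \<epsilon>" "\<epsilon> \<le> 1" and c: "c \<ge> 0"
  shows "(\<integral>\<^sup>+x. ennreal (indicator (cball 0 t) x * (indicator (shifted_ball \<epsilon> t x) y * c)) \<partial>lborel)
       \<le> ennreal (indicator (cball 0 t) y * c * (unit_ball_vol DIM('a) * \<epsilon>^DIM('a)))"
proof -
  define z where "z = (1 / (1 - \<epsilon>/(2*t))) *\<^sub>R y"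
  have "(\<integral>\<^sup>+x. ennreal (indicator (cball 0 t) x * (indicator (shifted_ball \<epsilon> t x) y * c)) \<partial>lborel)
     \<le> (\<integral>\<^sup>+x. ennreal (indicator (cball 0 t) y * c) * indicator (ball z \<epsilon>) x \<partial>lborel)"
  proof (rule nn_integral_mono)
    fix x
    show "ennreal (indicator (cball 0 t) x * (indicator (shifted_ball \<epsilon> t x) y * c))
       \<le> ennreal (indicator (cball 0 t) y * c) * indicator (ball z \<epsilon>) x"
    proof (cases "x \<in> cball 0 t \<and> y \<in> shifted_ball \<epsilon> t x")
      case True
      then have "y \<in> cball 0 t" "x \<in> ball z \<epsilon>"
        using shifted_ball_geometry(1,3)[OF t \<epsilon>, of x y] unfolding z_def by auto
      then show ?thesis using True by simp
    qed (auto simp: indicator_def)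
  qed
  also have "\<dots> = ennreal (indicator (cball 0 t) y * c * (unit_ball_vol DIM('a) * \<epsilon>^DIM('a)))"
    using \<epsilon> c by (simp add: nn_integral_cmult_indicator emeasure_ball ennreal_mult')
  finally show ?thesis .
qed

lemma shifted_ball_Tonelli:
  fixes g :: "'a::euclidean_space \<Rightarrow> real"
  assumes [measurable]: "g \<in> borel_measurable borel" and g0: "\<And>y. 0 \<le> g y" and gM: "\<And>y. g y \<le> M"
    and t: "t > 1" and \<epsilon>: "0 < \<epsilon>" "\<epsilon> \<le> 1"
  defines "B \<equiv> cball (0::'a) t"
  shows "integrable lborel (\<lambda>x. indicator B x * (\<integral>y. indicator (shifted_ball \<epsilon> t x) y * g y \<partial>lborel))"
    and "(\<integral>x. indicator B x * (\<integral>y. indicator (shifted_ball \<epsilon> t x) y * g y \<partial>lborel) \<partial>lborel)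
       \<le> unit_ball_vol DIM('a) * \<epsilon>^DIM('a) * (\<integral>y. indicator B y * g y \<partial>lborel)"
proof -
  define A where "A = (shifted_ball \<epsilon> t :: 'a \<Rightarrow> 'a set)"
  define w where "w = unit_ball_vol DIM('a)"
  define I where "I x = (\<integral>y. indicator (A x) y * g y \<partial>lborel)" for x
  define F where "F = (\<integral>y. indicator B y * g y \<partial>lborel)"
  have [measurable]: "B \<in> sets borel" unfolding B_def by simp
  have Im[measurable]: "I \<in> borel_measurable borel" unfolding I_def A_def by measurable
  have AB: "A x \<subseteq> B" if "x \<in> B" for x
    using shifted_ball_geometry(1)[OF t \<epsilon>] that unfolding A_def B_def by auto
  have iA: "integrable lborel (\<lambda>y. indicator (A x) y * g y)" for x
    by (rule integrable_indicator_bounded[where B=M]) (auto simp: A_def shifted_ball_def g0 gM)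
  have iB: "integrable lborel (\<lambda>y. indicator B y * g y)"
    by (rule integrable_indicator_bounded[where B=M]) (auto simp: B_def g0 gM)
  have I0: "I x \<ge> 0" for x unfolding I_def by (rule integral_nonneg_AE) (auto simp: g0)
  have IF: "I x \<le> F" if "x \<in> B" for x unfolding I_def F_def
    by (rule integral_mono[OF iA iB]) (use AB[OF that] g0 in \<open>auto simp: indicator_def\<close>)
  have iI: "integrable lborel (\<lambda>x. indicator B x * I x)"
    by (rule integrable_indicator_bounded[where B=F]) (auto simp: B_def IF I0)
  have inner: "ennreal (indicator B x * I x) = (\<integral>\<^sup>+y. ennreal (indicator B x * (indicator (A x) y * g y)) \<partial>lborel)" for x
  proof -
    have "(\<integral>\<^sup>+y. ennreal (indicator B x * (indicator (A x) y * g y)) \<partial>lborel)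
        = ennreal (\<integral>y. indicator B x * (indicator (A x) y * g y) \<partial>lborel)"
      using iA by (intro nn_integral_eq_integral) (auto simp: g0)
    then show ?thesis unfolding I_def by simp
  qed
  have "ennreal (\<integral>x. indicator B x * I x \<partial>lborel) = (\<integral>\<^sup>+x. ennreal (indicator B x * I x) \<partial>lborel)"
    by (rule nn_integral_eq_integral[OF iI, symmetric]) (auto simp: I0)
  also have "\<dots> = (\<integral>\<^sup>+y. (\<integral>\<^sup>+x. ennreal (indicator B x * (indicator (A x) y * g y)) \<partial>lborel) \<partial>lborel)"
    unfolding inner A_def by (rule lborel_pair.Fubini'[symmetric]) measurable
  also have "\<dots> \<le> (\<integral>\<^sup>+y. ennreal (indicator B y * g y * (w * \<epsilon>^DIM('a))) \<partial>lborel)"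
    unfolding A_def B_def w_def by (intro nn_integral_mono shifted_ball_centres_measure t \<epsilon> g0)
  also have "\<dots> = ennreal (F * (w * \<epsilon>^DIM('a)))"
    unfolding F_def w_def using iB \<epsilon> g0 by (subst nn_integral_eq_integral) auto
  finally have "(\<integral>x. indicator B x * I x \<partial>lborel) \<le> F * (w * \<epsilon>^DIM('a))"
    using \<epsilon> by (subst (asm) ennreal_le_iff) (auto simp: F_def w_def iB g0 intro!: integral_nonneg_AE)
  then show "(\<integral>x. indicator B x * (\<integral>y. indicator (shifted_ball \<epsilon> t x) y * g y \<partial>lborel) \<partial>lborel)
       \<le> unit_ball_vol DIM('a) * \<epsilon>^DIM('a) * (\<integral>y. indicator B y * g y \<partial>lborel)"
    unfolding I_def F_def w_def A_def by (simp add: mult_ac)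
  show "integrable lborel (\<lambda>x. indicator B x * (\<integral>y. indicator (shifted_ball \<epsilon> t x) y * g y \<partial>lborel))"
    using iI unfolding I_def A_def .
qed

lemma averaging_constants:
  fixes \<epsilon> w \<alpha> F :: real and d :: nat
  assumes \<epsilon>: "\<epsilon> > 0" and w: "w > 0"
  shows "2 * \<epsilon> powr (real d + \<alpha>) / (w * (\<epsilon>/2)^d) = (2^(d+1) / w) * \<epsilon> powr \<alpha>"
    and "2 * F / (w * (\<epsilon>/2)^d)\<^sup>2 * (w * \<epsilon>^d * F) = (2 * 4^d / w) / \<epsilon>^d * F\<^sup>2"
proof -
  have "\<epsilon> powr (real d + \<alpha>) = \<epsilon>^d * \<epsilon> powr \<alpha>" using \<epsilon> by (simp add: powr_add powr_realpow)
  then show "2 * \<epsilon> powr (real d + \<alpha>) / (w * (\<epsilon>/2)^d) = (2^(d+1) / w) * \<epsilon> powr \<alpha>"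
    using \<epsilon> w by (simp add: field_simps power_divide)
  have e4: "(2::real)^d * 2^d = 4^d" by (simp add: power_mult_distrib[symmetric])
  show "2 * F / (w * (\<epsilon>/2)^d)\<^sup>2 * (w * \<epsilon>^d * F) = (2 * 4^d / w) / \<epsilon>^d * F\<^sup>2"
    using \<epsilon> w by (simp add: field_simps power_divide power2_eq_square power_mult_distrib e4 flip: power_mult)
qed

text \<open>Average \<open>f\<close> over the shifted ball
  attached to each \<open>x \<in> B\<close>, then integrate over \<open>x\<close> using Tonelli.\<close>
lemma local_lebesgue_estimate:
  fixes f :: "'a::euclidean_space \<Rightarrow> real"
  assumes fm[measurable]: "f \<in> borel_measurable borel" and M: "\<And>y. \<bar>f y\<bar> \<le> M"
    and t: "t > 1" and \<epsilon>: "0 < \<epsilon>" "\<epsilon> \<le> 1" and \<alpha>: "\<alpha> \<ge> 0"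
    and kint: "\<And>x. integrable lborel (\<lambda>y. (f y - f x)\<^sup>2 / norm (y - x) powr (real DIM('a) + \<alpha>))"
    and \<Gamma>: "\<And>x. 0 \<le> frac_energy \<alpha> f x" "\<And>x. frac_energy \<alpha> f x \<le> K"
  shows "(\<integral>x. indicator (cball 0 t) x * (f x)\<^sup>2 \<partial>lborel)
     \<le> (2^(DIM('a)+1) / unit_ball_vol DIM('a)) * \<epsilon> powr \<alpha> * (\<integral>x. indicator (cball 0 t) x * frac_energy \<alpha> f x \<partial>lborel)
       + (2 * 4^DIM('a) / unit_ball_vol DIM('a)) / \<epsilon>^DIM('a) * (\<integral>y. indicator (cball 0 t) y * \<bar>f y\<bar> \<partial>lborel)\<^sup>2"
proof -
  define d where "d = DIM('a)"
  define p where "p = real d + \<alpha>"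
  define w where "w = unit_ball_vol (real d)"
  have w0: "w > 0" unfolding w_def by simp
  define a where "a = w * (\<epsilon>/2)^d"
  have a0: "a > 0" unfolding a_def using w0 \<epsilon> by simp
  define B where "B = cball (0::'a) t"
  define A where "A = (shifted_ball \<epsilon> t :: 'a \<Rightarrow> 'a set)"
  define g where "g = frac_energy \<alpha> f"
  define F where "F = (\<integral>y. indicator B y * \<bar>f y\<bar> \<partial>lborel)"
  define I where "I x = (\<integral>y. indicator (A x) y * \<bar>f y\<bar> \<partial>lborel)" for x
  have [measurable]: "B \<in> sets borel" "g \<in> borel_measurable borel" unfolding B_def g_def by simp_all
  have bB: "bounded B" unfolding B_def by simp
  have pw: "indicator B x * (f x)\<^sup>2 \<le> 2 * \<epsilon> powr p / a * (indicator B x * g x) + 2 * F / a\<^sup>2 * (indicator B x * I x)" for x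
  proof (cases "x \<in> B")
    case True
    have mA: "measure lborel (A x) = a" unfolding A_def a_def w_def d_def
      using measure_shifted_ball[of \<epsilon>] \<epsilon> by simp
    have AB: "A x \<subseteq> B"
      using shifted_ball_geometry(1)[OF t \<epsilon>] True unfolding A_def B_def by auto
    have near: "norm (y - x) \<le> \<epsilon>" if "y \<in> A x" for y
      using shifted_ball_geometry(2)[OF t \<epsilon>] True that unfolding A_def B_def by auto
    have "(f x)\<^sup>2 \<le> 2 * \<epsilon> powr p / a * g x + 2 * F / a\<^sup>2 * I x"
      unfolding g_def F_def I_def frac_energy_def p_def d_def
      by (rule pointwise_average_bound[OF fm M _ _ _ bB mA a0 AB near])
        (use \<epsilon> \<alpha> kint in \<open>auto simp: A_def shifted_ball_def p_def d_def\<close>)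
    then show ?thesis using True by simp
  qed simp
  have ig: "integrable lborel (\<lambda>x. indicator B x * g x)"
    by (rule integrable_indicator_bounded[where B=K]) (use \<Gamma> in \<open>auto simp: bB g_def\<close>)
  have iI: "integrable lborel (\<lambda>x. indicator B x * I x)"
    unfolding I_def A_def B_def by (rule shifted_ball_Tonelli(1)[OF _ _ M t \<epsilon>]) simp_all
  have if2: "integrable lborel (\<lambda>x. indicator B x * (f x)\<^sup>2)"
  proof (rule integrable_indicator_bounded[where B="M\<^sup>2"])
    fix x show "\<bar>(f x)\<^sup>2\<bar> \<le> M\<^sup>2" using power_mono[OF M[of x] abs_ge_zero, of 2] by simp
  qed (auto simp: bB)
  have "(\<integral>x. indicator B x * (f x)\<^sup>2 \<partial>lborel) \<le>
      (\<integral>x. 2 * \<epsilon> powr p / a * (indicator B x * g x) + 2 * F / a\<^sup>2 * (indicator B x * I x) \<partial>lborel)"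
    by (rule integral_mono[OF if2 _ pw]) (use ig iI in simp)
  also have "\<dots> = 2 * \<epsilon> powr p / a * (\<integral>x. indicator B x * g x \<partial>lborel) + 2 * F / a\<^sup>2 * (\<integral>x. indicator B x * I x \<partial>lborel)"
    using ig iI by simp
  also have "\<dots> \<le> 2 * \<epsilon> powr p / a * (\<integral>x. indicator B x * g x \<partial>lborel) + 2 * F / a\<^sup>2 * (w * \<epsilon>^d * F)"
  proof -
    have "(\<integral>x. indicator B x * I x \<partial>lborel) \<le> w * \<epsilon>^d * F"
      unfolding I_def F_def A_def B_def w_def d_def
      by (rule shifted_ball_Tonelli(2)[OF _ _ M t \<epsilon>]) simp_all
    moreover have "F \<ge> 0" unfolding F_def by (rule integral_nonneg_AE) simp
    ultimately show ?thesis using a0 by (intro add_left_mono mult_left_mono) auto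
  qed
  also have "\<dots> = (2^(d+1) / w) * \<epsilon> powr \<alpha> * (\<integral>x. indicator B x * g x \<partial>lborel) + (2 * 4^d / w) / \<epsilon>^d * F\<^sup>2"
    unfolding a_def p_def using averaging_constants[OF \<epsilon>(1) w0] by simp
  finally show ?thesis unfolding B_def g_def F_def w_def d_def .
qed

locale gibbs_potential =
  fixes V :: "'a::euclidean_space \<Rightarrow> real"
  assumes V_meas[measurable]: "V \<in> borel_measurable borel"
    and V_locbdd: "\<And>K. compact K \<Longrightarrow> bounded (V ` K)"
    and expV_int: "integrable lborel (\<lambda>x. exp (- V x))"
begin

definition "Z = ZV V"
definition "\<rho> x = exp (- V x) / Z"

lemma Z_pos: "Z > 0"
proof -
  have "Z \<ge> 0" unfolding Z_def ZV_def by (rule integral_nonneg_AE) simp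
  moreover have "Z \<noteq> 0"
  proof
    assume "Z = 0"
    then have "AE x in lborel. exp (- V x) = 0"
      using integral_nonneg_eq_0_iff_AE[OF expV_int] unfolding Z_def ZV_def by simp
    then have "emeasure lborel (UNIV::'a set) = 0" by (simp add: eventually_False ae_filter_eq_bot_iff)
    then show False by simp
  qed
  ultimately show ?thesis by simp
qed

lemma rho_pos: "\<rho> x > 0" using Z_pos by (simp add: \<rho>_def)

lemma rho_meas[measurable]: "\<rho> \<in> borel_measurable borel" unfolding \<rho>_def by measurable

lemma muV_density: "muV V = density lborel (\<lambda>x. ennreal (\<rho> x))"
  unfolding muV_def \<rho>_def Z_def ..

lemma sets_muV[simp, measurable_cong]: "sets (muV V) = sets borel"
  by (simp add: muV_density)

lemma space_muV[simp]: "space (muV V) = UNIV"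
  by (simp add: muV_density)

lemma integral_muV: "g \<in> borel_measurable borel \<Longrightarrow> integral\<^sup>L (muV V) g = (\<integral>x. \<rho> x * g x \<partial>lborel)"
  unfolding muV_density using rho_pos by (subst integral_density) (auto simp: less_imp_le)

lemma muV_UNIV: "emeasure (muV V) UNIV = 1"
proof -
  have "emeasure (muV V) UNIV = (\<integral>\<^sup>+x. ennreal (\<rho> x) \<partial>lborel)"
    unfolding muV_density by (subst emeasure_density) auto
  also have "\<dots> = ennreal (\<integral>x. \<rho> x \<partial>lborel)"
    using rho_pos expV_int unfolding \<rho>_def
    by (intro nn_integral_eq_integral) (auto simp: less_imp_le)
  also have "(\<integral>x. \<rho> x \<partial>lborel) = 1" unfolding \<rho>_def using Z_pos
    by (simp add: Z_def ZV_def)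
  finally show ?thesis by simp
qed

lemma finite_muV: "finite_measure (muV V)"
  by (rule finite_measureI) (simp add: muV_UNIV)

lemma integrable_muV_bounded:
  fixes g :: "'a \<Rightarrow> real"
  shows "g \<in> borel_measurable borel \<Longrightarrow> (\<And>x. \<bar>g x\<bar> \<le> B) \<Longrightarrow> integrable (muV V) g"
  by (rule finite_measure.integrable_const_bound[OF finite_muV, where B=B]) auto

lemma muV_set_integral_const_le:
  fixes c :: real assumes "A \<in> sets borel"
  shows "\<bar>integral\<^sup>L (muV V) (\<lambda>x. indicator A x * c)\<bar> \<le> \<bar>c\<bar>"
proof -
  have "integral\<^sup>L (muV V) (\<lambda>x. indicator A x * c) = measure (muV V) A * c"
    using assms by simp
  moreover have "measure (muV V) A \<le> 1"
    using finite_measure.bounded_measure[OF finite_muV, of A] muV_UNIV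
    by (simp add: measure_def)
  ultimately show ?thesis by (simp add: abs_mult mult_left_le_one_le)
qed

lemma V_bounded_on_cball: "\<exists>K. \<forall>x\<in>cball 0 t. \<bar>V x\<bar> \<le> K"
  using V_locbdd[of "cball 0 t"] by (auto simp: bounded_iff)

lemma hV_le: "x \<in> cball 0 t \<Longrightarrow> hV V t \<le> exp (V x)"
  unfolding hV_def by (rule cINF_lower) (auto intro: bdd_belowI[where m=0] less_imp_le)

lemma HV_ge: "x \<in> cball 0 t \<Longrightarrow> exp (V x) \<le> HV V t"
proof -
  obtain K where K: "\<forall>x\<in>cball 0 t. \<bar>V x\<bar> \<le> K" using V_bounded_on_cball by blast
  assume x: "x \<in> cball 0 t"
  show ?thesis unfolding HV_def
    by (rule cSUP_upper[OF x]) (use K in \<open>auto intro!: bdd_aboveI[where M="exp K"]\<close>)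
qed

lemma hV_pos: "t \<ge> 0 \<Longrightarrow> hV V t > 0"
proof -
  assume t: "t \<ge> 0"
  obtain K where K: "\<forall>x\<in>cball 0 t. \<bar>V x\<bar> \<le> K" using V_bounded_on_cball by blast
  have "exp (- K) \<le> hV V t" unfolding hV_def
    by (rule cINF_greatest) (use t K in fastforce)+
  then show ?thesis by (meson exp_gt_zero less_le_trans)
qed

lemma hV_le_HV: "t \<ge> 0 \<Longrightarrow> hV V t \<le> HV V t"
  using hV_le[of 0 t] HV_ge[of 0 t] by simp

lemma rho_upper: "x \<in> cball 0 t \<Longrightarrow> \<rho> x \<le> 1 / (Z * hV V t)"
proof -
  assume x: "x \<in> cball 0 t"
  then have h: "hV V t > 0" by (intro hV_pos) (auto intro: order_trans[OF norm_ge_zero])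
  have "exp (- V x) = 1 / exp (V x)" by (simp add: exp_minus field_simps)
  also have "\<dots> \<le> 1 / hV V t" using hV_le[OF x] h by (intro divide_left_mono) auto
  finally show ?thesis unfolding \<rho>_def using Z_pos by (simp add: divide_right_mono field_simps)
qed

lemma rho_lower: "x \<in> cball 0 t \<Longrightarrow> 1 / (Z * HV V t) \<le> \<rho> x"
proof -
  assume x: "x \<in> cball 0 t"
  have e: "exp (V x) \<le> HV V t" by (rule HV_ge[OF x])
  then have "0 < HV V t * exp (V x)" by (intro mult_pos_pos) (auto intro: less_le_trans[OF exp_gt_zero])
  then have "1 / HV V t \<le> 1 / exp (V x)" using e by (intro divide_left_mono) auto
  also have "\<dots> = exp (- V x)" by (simp add: exp_minus field_simps)
  finally show ?thesis unfolding \<rho>_def using Z_pos by (simp add: divide_right_mono field_simps)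
qed

lemma ball_integral_muV_le_lborel:
  fixes g :: "'a \<Rightarrow> real"
  assumes [measurable]: "g \<in> borel_measurable borel" and g: "\<And>x. 0 \<le> g x" "\<And>x. g x \<le> K" and t: "t \<ge> 0"
  shows "(\<integral>x. indicator (cball 0 t) x * g x \<partial>muV V)
       \<le> (\<integral>x. indicator (cball 0 t) x * g x \<partial>lborel) / (Z * hV V t)"
proof -
  define B where "B = cball (0::'a) t"
  define c where "c = 1 / (Z * hV V t)"
  have c0: "c > 0" unfolding c_def using Z_pos hV_pos[OF t] by simp
  have iB: "integrable lborel (\<lambda>x. indicator B x * g x)"
    by (rule integrable_indicator_bounded[where B=K]) (use g in \<open>auto simp: B_def\<close>)
  have "(\<integral>x. indicator B x * g x \<partial>muV V) = (\<integral>x. \<rho> x * (indicator B x * g x) \<partial>lborel)"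
    unfolding B_def by (rule integral_muV) measurable
  also have "\<dots> \<le> (\<integral>x. c * (indicator B x * g x) \<partial>lborel)"
  proof (rule integral_mono)
    have "integrable lborel (\<lambda>x. indicator B x * (\<rho> x * g x))"
    proof (rule integrable_indicator_bounded[where B="c * K"])
      fix x assume "x \<in> B"
      then have "\<rho> x * g x \<le> c * K"
        using rho_upper[of x t] g[of x] c0 unfolding B_def c_def by (intro mult_mono) auto
      then show "\<bar>\<rho> x * g x\<bar> \<le> c * K" using rho_pos[of x] g[of x] by simp
    qed (auto simp: B_def)
    then show "integrable lborel (\<lambda>x. \<rho> x * (indicator B x * g x))" by (simp add: mult_ac)
    show "integrable lborel (\<lambda>x. c * (indicator B x * g x))" using iB by simp
    fix x show "\<rho> x * (indicator B x * g x) \<le> c * (indicator B x * g x)"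
    proof (cases "x \<in> B")
      case True
      have "\<rho> x * g x \<le> c * g x"
        using True g(1) unfolding B_def c_def by (intro mult_right_mono rho_upper) auto
      then show ?thesis using True by simp
    qed simp
  qed
  also have "\<dots> = (\<integral>x. indicator B x * g x \<partial>lborel) / (Z * hV V t)" unfolding c_def by simp
  finally show ?thesis unfolding B_def .
qed

lemma ball_integral_lborel_le_muV:
  fixes g :: "'a \<Rightarrow> real"
  assumes [measurable]: "g \<in> borel_measurable borel" and g: "\<And>x. 0 \<le> g x" "\<And>x. g x \<le> K" and t: "t \<ge> 0"
  shows "(\<integral>x. indicator (cball 0 t) x * g x \<partial>lborel) \<le> Z * HV V t * (\<integral>x. g x \<partial>muV V)"
proof -
  define B where "B = cball (0::'a) t"
  define c where "c = Z * HV V t"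
  have [measurable]: "B \<in> sets borel" unfolding B_def by simp
  have c0: "c > 0" unfolding c_def using Z_pos hV_pos[OF t] hV_le_HV[OF t] by simp
  have K0: "K \<ge> 0" using g[of 0] by linarith
  have ig: "integrable (muV V) g" by (rule integrable_muV_bounded[where B=K]) (use g in auto)
  have "(\<integral>x. indicator B x * g x \<partial>lborel) \<le> (\<integral>x. c * (\<rho> x * (indicator B x * g x)) \<partial>lborel)"
  proof (rule integral_mono)
    show "integrable lborel (\<lambda>x. indicator B x * g x)"
      by (rule integrable_indicator_bounded[where B=K]) (use g in \<open>auto simp: B_def\<close>)
    have "integrable (muV V) (\<lambda>x. indicator B x * g x)"
      by (rule integrable_muV_bounded[where B=K]) (use g K0 in \<open>auto simp: B_def indicator_def\<close>)
    then have "integrable lborel (\<lambda>x. \<rho> x * (indicator B x * g x))"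
      unfolding muV_density using rho_pos by (subst (asm) integrable_density) (auto simp: less_imp_le)
    then show "integrable lborel (\<lambda>x. c * (\<rho> x * (indicator B x * g x)))" by simp
    fix x show "indicator B x * g x \<le> c * (\<rho> x * (indicator B x * g x))"
    proof (cases "x \<in> B")
      case True
      have "1 \<le> c * \<rho> x" using rho_lower[of x t] True c0 unfolding B_def c_def by (simp add: field_simps)
      then show ?thesis using True g[of x] mult_right_mono[of 1 "c * \<rho> x" "g x"] by (simp add: mult_ac)
    qed simp
  qed
  also have "\<dots> = c * (\<integral>x. indicator B x * g x \<partial>muV V)" by (simp add: integral_muV B_def)
  also have "\<dots> \<le> c * (\<integral>x. g x \<partial>muV V)"
    by (intro mult_left_mono integral_mono ig integrable_muV_bounded[where B=K])
      (use c0 g K0 in \<open>auto simp: B_def indicator_def abs_mult\<close>)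
  finally show ?thesis unfolding B_def c_def .
qed

text \<open>The local estimate transferred to \<open>\<mu>\<^sub>V\<close>: on \<open>cball 0 t\<close> the density of \<open>\<mu>\<^sub>V\<close> lies
  between \<open>1/(Z H(t))\<close> and \<open>1/(Z h(t))\<close>, which costs the factors \<open>H/h\<close> and \<open>Z H\<^sup>2/h\<close>.\<close>
lemma local_muV_estimate:
  fixes f :: "'a \<Rightarrow> real"
  assumes fm[measurable]: "f \<in> borel_measurable borel" and M: "\<And>y. \<bar>f y\<bar> \<le> M"
    and t: "t > 1" and \<epsilon>: "0 < \<epsilon>" "\<epsilon> \<le> 1" and \<alpha>: "\<alpha> \<ge> 0"
    and kint: "\<And>x. integrable lborel (\<lambda>y. (f y - f x)\<^sup>2 / norm (y - x) powr (real DIM('a) + \<alpha>))"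
    and \<Gamma>: "\<And>x. 0 \<le> frac_energy \<alpha> f x" "\<And>x. frac_energy \<alpha> f x \<le> K"
  shows "(\<integral>x. indicator (cball 0 t) x * (f x)\<^sup>2 \<partial>muV V)
     \<le> (2^(DIM('a)+1) / unit_ball_vol DIM('a)) * \<epsilon> powr \<alpha> * (HV V t / hV V t) * DaV \<alpha> V f
       + (2 * 4^DIM('a) / unit_ball_vol DIM('a)) / \<epsilon>^DIM('a) * (Z * (HV V t)\<^sup>2 / hV V t) *
          (\<integral>x. \<bar>f x\<bar> \<partial>muV V)\<^sup>2"
proof -
  define c1 where "c1 = 2^(DIM('a)+1) / unit_ball_vol DIM('a) * \<epsilon> powr \<alpha>"
  define c2 where "c2 = (2 * 4^DIM('a) / unit_ball_vol DIM('a)) / \<epsilon>^DIM('a)"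
  define B where "B = cball (0::'a) t"
  define h where "h = hV V t"
  define H where "H = HV V t"
  define m where "m = (\<integral>x. \<bar>f x\<bar> \<partial>muV V)"
  define F where "F = (\<integral>x. indicator B x * \<bar>f x\<bar> \<partial>lborel)"
  define G where "G = (\<integral>x. indicator B x * frac_energy \<alpha> f x \<partial>lborel)"
  have t0: "t \<ge> 0" using t by simp
  have h0: "h > 0" unfolding h_def by (rule hV_pos[OF t0])
  have c1: "c1 \<ge> 0" and c2: "c2 \<ge> 0" unfolding c1_def c2_def using \<epsilon> by simp_all
  have M0: "M \<ge> 0" using M[of 0] by simp
  have F0: "F \<ge> 0" unfolding F_def by (rule integral_nonneg_AE) simp
  have f2: "(f x)\<^sup>2 \<le> M\<^sup>2" for x using power_mono[OF M[of x] abs_ge_zero, of 2] by simp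
  have "(\<integral>x. indicator B x * (f x)\<^sup>2 \<partial>muV V) \<le> (\<integral>x. indicator B x * (f x)\<^sup>2 \<partial>lborel) / (Z * h)"
    unfolding B_def h_def by (rule ball_integral_muV_le_lborel[OF _ _ f2 t0]) simp_all
  also have "(\<integral>x. indicator B x * (f x)\<^sup>2 \<partial>lborel) \<le> c1 * G + c2 * F\<^sup>2"
    unfolding c1_def c2_def G_def F_def B_def by (rule local_lebesgue_estimate[OF fm M t \<epsilon> \<alpha> kint \<Gamma>])
  also have "c1 * G + c2 * F\<^sup>2 \<le> c1 * (Z * H * DaV \<alpha> V f) + c2 * (Z * H * m)\<^sup>2"
  proof (intro add_mono mult_left_mono power_mono c1 c2 F0)
    show "G \<le> Z * H * DaV \<alpha> V f"
      unfolding G_def H_def B_def DaV_frac_energy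
      by (rule ball_integral_lborel_le_muV[OF _ \<Gamma> t0]) simp
    show "F \<le> Z * H * m"
      unfolding F_def H_def B_def m_def
      by (rule ball_integral_lborel_le_muV[OF _ _ M t0]) simp_all
  qed
  finally have "(\<integral>x. indicator B x * (f x)\<^sup>2 \<partial>muV V)
      \<le> (c1 * (Z * H * DaV \<alpha> V f) + c2 * (Z * H * m)\<^sup>2) / (Z * h)"
    using Z_pos h0 by (simp add: divide_right_mono)
  also have "\<dots> = c1 * (H / h) * DaV \<alpha> V f + c2 * (Z * H\<^sup>2 / h) * m\<^sup>2"
    using Z_pos h0 by (simp add: field_simps power2_eq_square)
  finally show ?thesis unfolding c1_def c2_def B_def h_def H_def m_def .
qed

end

lemma averaging_radius_choice:
  fixes c H h s \<alpha> :: real and d :: nat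
  assumes c: "c > 0" and hH: "h \<le> H" and h: "h > 0" and s: "s > 0" and \<alpha>: "\<alpha> > 0"
  shows "\<exists>\<epsilon>. 0 < \<epsilon> \<and> \<epsilon> \<le> 1 \<and> c * \<epsilon> powr \<alpha> * (H/h) \<le> s \<and> 1/\<epsilon>^d \<le> 1 + (c*H/(s*h)) powr (d/\<alpha>)"
proof -
  define u where "u = s*h/(c*H)"
  have u: "u > 0" unfolding u_def using s h c hH by simp
  define \<epsilon> where "\<epsilon> = min 1 (u powr (1/\<alpha>))"
  have e0: "\<epsilon> > 0" unfolding \<epsilon>_def using u by simp
  have e1: "\<epsilon> \<le> 1" unfolding \<epsilon>_def by simp
  have "\<epsilon> powr \<alpha> \<le> (u powr (1/\<alpha>)) powr \<alpha>"
    using e0 \<alpha> unfolding \<epsilon>_def by (intro powr_mono2) auto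
  also have "\<dots> = u" using \<alpha> u by (simp add: powr_powr)
  finally have "c * \<epsilon> powr \<alpha> * (H/h) \<le> c * u * (H/h)"
    using c h hH by (intro mult_right_mono mult_left_mono) auto
  also have "\<dots> = s" unfolding u_def using c h hH by (simp add: field_simps)
  finally have energy: "c * \<epsilon> powr \<alpha> * (H/h) \<le> s" .
  have mass: "1/\<epsilon>^d \<le> 1 + (c*H/(s*h)) powr (d/\<alpha>)"
  proof (cases "u powr (1/\<alpha>) \<ge> 1")
    case True
    then show ?thesis unfolding \<epsilon>_def by simp
  next
    case False
    then have "\<epsilon>^d = u powr (d/\<alpha>)"
      unfolding \<epsilon>_def using u by (simp add: powr_realpow[symmetric] powr_powr)
    then have "1/\<epsilon>^d = (1/u) powr (d/\<alpha>)" using u by (simp add: powr_divide)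
    also have "1/u = c*H/(s*h)" unfolding u_def by simp
    finally show ?thesis by simp
  qed
  show ?thesis using e0 e1 energy mass by blast
qed

lemma HV_hV_weight_factor:
  fixes H h e :: real
  assumes h: "h > 0" and hH: "h \<le> H"
  shows "H powr (2 + e) * h powr (-1 - e) = (H\<^sup>2 / h) * (H/h) powr e"
proof -
  have H: "H > 0" using hH h by simp
  have "H powr (2 + e) * h powr (-1 - e) = (H powr 2 * H powr e) * (h powr (-1) * h powr (-e))"
    using powr_add[of H 2 e] powr_add[of h "-1" "-e"] by simp
  also have "\<dots> = (H\<^sup>2 / h) * (H powr e / h powr e)"
    using H h by (simp add: powr_numeral powr_minus_divide field_simps)
  also have "H powr e / h powr e = (H/h) powr e" using H h by (simp add: powr_divide)
  finally show ?thesis .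
qed

lemma HV_hV_weight_ge:
  fixes H h e :: real
  assumes h: "h > 0" and hH: "h \<le> H" and e: "e \<ge> 0"
  shows "H \<le> H powr (2 + e) * h powr (-1 - e)"
proof -
  have "H * 1 \<le> (H\<^sup>2 / h) * (H/h) powr e"
  proof (rule mult_mono)
    show "H \<le> H\<^sup>2 / h" using h hH by (simp add: field_simps power2_eq_square mult_right_mono)
    show "1 \<le> (H/h) powr e" using hH h e by (intro ge_one_powr_ge_zero) auto
  qed (use h hH in auto)
  then show ?thesis using HV_hV_weight_factor[OF h hH] by simp
qed

lemma mass_coefficient_bound:
  fixes H h s e c :: real
  assumes hH: "h \<le> H" and h: "h > 0" and s: "s > 0" and e: "e \<ge> 0" and c: "c > 0"
  shows "(H\<^sup>2 / h) * (1 + (c*H/(s*h)) powr e)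
     \<le> (1 + c powr e) * (H powr (2 + e) * h powr (-1 - e) * (1 + s powr (- e)))"
proof -
  define X where "X = H powr (2 + e) * h powr (-1 - e)"
  have X: "X = (H\<^sup>2 / h) * (H/h) powr e" unfolding X_def by (rule HV_hV_weight_factor[OF h hH])
  have HX: "H\<^sup>2 / h \<le> X"
  proof -
    have "(H/h) powr e \<ge> 1" using hH h e by (intro ge_one_powr_ge_zero) auto
    then have "H\<^sup>2 / h * 1 \<le> H\<^sup>2 / h * (H/h) powr e" by (intro mult_left_mono) (use h in auto)
    then show ?thesis unfolding X by simp
  qed
  have "(c*H/(s*h)) powr e = c powr e * (H/h) powr e * s powr (-e)"
  proof -
    have "(c*H/(s*h)) powr e = (c * (H/h)) powr e / s powr e"
      using c hH h s by (simp add: powr_divide powr_mult mult.commute)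
    moreover have "(c * (H/h)) powr e = c powr e * (H/h) powr e" by (rule powr_mult)
    ultimately show ?thesis by (simp add: powr_minus_divide)
  qed
  then have "(H\<^sup>2 / h) * (1 + (c*H/(s*h)) powr e) = H\<^sup>2 / h + X * c powr e * s powr (-e)"
    unfolding X by (simp add: algebra_simps)
  also have "\<dots> \<le> X + X * c powr e * s powr (-e) + X * c powr e + X * s powr (-e)"
  proof -
    have "X \<ge> 0" unfolding X_def by simp
    then show ?thesis using HX by (simp add: add_increasing2)
  qed
  also have "\<dots> = (1 + c powr e) * (X * (1 + s powr (- e)))" by (simp add: algebra_simps)
  finally show ?thesis unfolding X_def .
qed

locale growing_weight =
  fixes \<omega> :: "'a::euclidean_space \<Rightarrow> real"
  assumes \<omega>_pos: "\<And>x. \<omega> x > 0"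
    and \<omega>_cont: "continuous_on UNIV \<omega>"
    and \<omega>_lim: "filterlim \<omega> at_top at_infinity"
begin

lemma omega_inf_le: "norm x \<ge> t \<Longrightarrow> omega_inf \<omega> t \<le> \<omega> x"
  unfolding omega_inf_def
  by (rule cINF_lower) (auto simp: less_imp_le \<omega>_pos intro!: bdd_belowI[where m=0])

lemma omega_inf_greatest:
  assumes "\<And>x. norm x \<ge> t \<Longrightarrow> c \<le> \<omega> x" shows "c \<le> omega_inf \<omega> t"
proof -
  obtain x :: 'a where "norm x = max t 0" using vector_choose_size[of "max t 0"] by auto
  then have "{x::'a. norm x \<ge> t} \<noteq> {}" by (metis empty_iff max.cobounded1 mem_Collect_eq)
  then show ?thesis unfolding omega_inf_def by (rule cINF_greatest) (use assms in auto)
qed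

lemma omega_inf_mono: "s \<le> t \<Longrightarrow> omega_inf \<omega> s \<le> omega_inf \<omega> t"
  by (rule omega_inf_greatest) (rule omega_inf_le, simp)

lemma weight_large_outside_ball: "\<exists>R>0. \<forall>x. norm x \<ge> R \<longrightarrow> c \<le> \<omega> x"
proof -
  have "eventually (\<lambda>x. c \<le> \<omega> x) at_infinity" using \<omega>_lim by (simp add: filterlim_at_top)
  then obtain b where b: "\<forall>x. b \<le> norm x \<longrightarrow> c \<le> \<omega> x" by (auto simp: eventually_at_infinity)
  show ?thesis by (rule exI[of _ "max b 1"]) (use b in auto)
qed

text \<open>\<open>\<omega>\<close> is bounded below by a positive constant: it is \<open>\<ge> 1\<close> outside a ball and attains a
  positive minimum on that (compact) ball.\<close>
lemma weight_lower_bound: "\<exists>m>0. \<forall>x. m \<le> \<omega> x"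
proof -
  obtain R where R: "\<forall>x. norm x \<ge> R \<longrightarrow> 1 \<le> \<omega> x" using weight_large_outside_ball[of 1] by auto
  have ne: "cball (0::'a) (max R 0) \<noteq> {}" by simp
  have cont: "continuous_on (cball 0 (max R 0)) \<omega>" by (rule continuous_on_subset[OF \<omega>_cont]) simp
  obtain x0 :: 'a where x0: "\<forall>y\<in>cball 0 (max R 0). \<omega> x0 \<le> \<omega> y"
    using continuous_attains_inf[OF compact_cball ne cont] by blast
  have "min 1 (\<omega> x0) \<le> \<omega> x" for x
  proof (cases "norm x \<le> R")
    case True
    then have "\<omega> x0 \<le> \<omega> x" using x0 by simp
    then show ?thesis by linarith
  next
    case False
    then have "1 \<le> \<omega> x" using R by simp
    then show ?thesis by linarith
  qed
  then show ?thesis using \<omega>_pos[of x0] by (intro exI[of _ "min 1 (\<omega> x0)"]) auto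
qed

lemma omega_inf_pos: "omega_inf \<omega> t > 0"
proof -
  obtain m where "m > 0" "\<forall>x. m \<le> \<omega> x" using weight_lower_bound by blast
  then show ?thesis using omega_inf_greatest[of t m] by auto
qed

text \<open>\<open>\<kappa>(c)\<close> is a radius outside which \<open>\<omega> \<ge> c\<close>; the infimum defining it is attained
  by continuity of \<open>\<omega>\<close>.\<close>
lemma omega_inf_kappa: "omega_inf \<omega> (kappa \<omega> c) \<ge> c"
proof -
  define S where "S = {s. s > 0 \<and> omega_inf \<omega> s \<ge> c}"
  obtain R where R: "R > 0" "\<forall>x. norm x \<ge> R \<longrightarrow> c \<le> \<omega> x" using weight_large_outside_ball[of c] by auto
  have "R \<in> S" unfolding S_def using R by (auto intro!: omega_inf_greatest)
  then have Sne: "S \<noteq> {}" by auto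
  have bdd: "bdd_below S" unfolding S_def by (auto intro: bdd_belowI[where m=0])
  define \<kappa> where "\<kappa> = kappa \<omega> c"
  have k: "\<kappa> = Inf S" unfolding \<kappa>_def kappa_def S_def ..
  have sub: "{x::'a. \<kappa> < norm x} \<subseteq> {x. c \<le> \<omega> x}"
  proof
    fix x :: 'a assume "x \<in> {x. \<kappa> < norm x}"
    then obtain s where s: "s \<in> S" "s < norm x" using cInf_less_iff[OF Sne bdd] k by auto
    then have "c \<le> omega_inf \<omega> s" unfolding S_def by auto
    also have "\<dots> \<le> \<omega> x" using s by (intro omega_inf_le) auto
    finally show "x \<in> {x. c \<le> \<omega> x}" by simp
  qed
  have cl: "closed {x::'a. c \<le> \<omega> x}"
    by (intro closed_Collect_le continuous_on_const \<omega>_cont)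
  have "closure {x::'a. \<kappa> < norm x} = - ball 0 \<kappa>"
  proof -
    have "{x::'a. \<kappa> < norm x} = - cball 0 \<kappa>" by auto
    then show ?thesis by (simp add: closure_complement)
  qed
  then have "- ball 0 \<kappa> \<subseteq> {x::'a. c \<le> \<omega> x}" using closure_minimal[OF sub cl] by simp
  then show ?thesis unfolding \<kappa>_def[symmetric] by (intro omega_inf_greatest) (auto simp: subset_iff)
qed

end

definition beta_weight :: "real \<Rightarrow> ('a::euclidean_space \<Rightarrow> real) \<Rightarrow> real \<Rightarrow> real \<Rightarrow> real" where
  "beta_weight \<alpha> V t s = HV V t powr (2 + real DIM('a) / \<alpha>) * hV V t powr (-1 - real DIM('a) / \<alpha>)
     * (1 + s powr (- real DIM('a) / \<alpha>))"

lemma beta_weight_nonneg: "beta_weight \<alpha> V t s \<ge> 0"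
  unfolding beta_weight_def by simp

context gibbs_potential
begin

definition local_const :: "real \<Rightarrow> real" where
  "local_const \<alpha> = Z * (2 * 4^DIM('a) / unit_ball_vol DIM('a)) *
      (1 + (2^(DIM('a)+1) / unit_ball_vol DIM('a)) powr (real DIM('a) / \<alpha>))"

lemma local_const_pos: "local_const \<alpha> > 0"
  unfolding local_const_def using Z_pos by (intro mult_pos_pos add_pos_nonneg) auto

text \<open>The \<open>\<beta>\<close>-weight dominates \<open>e^(V 0)\<close>; this absorbs the squared-mean term of the tail
  bound into the \<open>\<beta>\<close>-term.\<close>
lemma beta_weight_ge: "t \<ge> 0 \<Longrightarrow> \<alpha> > 0 \<Longrightarrow> exp (V 0) \<le> beta_weight \<alpha> V t s"
proof -
  assume t: "t \<ge> 0" and \<alpha>: "\<alpha> > 0"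
  have "exp (V 0) \<le> HV V t" using HV_ge[of 0 t] t by simp
  also have "\<dots> \<le> HV V t powr (2 + real DIM('a) / \<alpha>) * hV V t powr (-1 - real DIM('a) / \<alpha>)"
    using hV_pos[OF t] hV_le_HV[OF t] \<alpha> by (intro HV_hV_weight_ge) auto
  also have "\<dots> \<le> beta_weight \<alpha> V t s"
    unfolding beta_weight_def
    using mult_left_mono[of 1 "1 + s powr (- real DIM('a) / \<alpha>)"
        "HV V t powr (2 + real DIM('a) / \<alpha>) * hV V t powr (-1 - real DIM('a) / \<alpha>)"] by simp
  finally show ?thesis .
qed

lemma local_part_bound:
  fixes f :: "'a \<Rightarrow> real"
  assumes fm[measurable]: "f \<in> borel_measurable borel" and M: "\<And>y. \<bar>f y\<bar> \<le> M"
    and t: "t > 1" and s: "s > 0" and \<alpha>: "\<alpha> > 0"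
    and kint: "\<And>x. integrable lborel (\<lambda>y. (f y - f x)\<^sup>2 / norm (y - x) powr (real DIM('a) + \<alpha>))"
    and \<Gamma>: "\<And>x. 0 \<le> frac_energy \<alpha> f x" "\<And>x. frac_energy \<alpha> f x \<le> K"
  shows "(\<integral>x. indicator (cball 0 t) x * (f x)\<^sup>2 \<partial>muV V)
     \<le> s * DaV \<alpha> V f + local_const \<alpha> * beta_weight \<alpha> V t s * (\<integral>x. \<bar>f x\<bar> \<partial>muV V)\<^sup>2"
proof -
  define d where "d = DIM('a)"
  define e where "e = real d / \<alpha>"
  define c where "c = 2^(d+1) / unit_ball_vol (real d)"
  define k where "k = 2 * 4^d / unit_ball_vol (real d)"
  define h where "h = hV V t"
  define H where "H = HV V t"
  define D where "D = DaV \<alpha> V f"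
  define m where "m = (\<integral>x. \<bar>f x\<bar> \<partial>muV V)"
  have c0: "c > 0" and k0: "k > 0" unfolding c_def k_def by simp_all
  have h0: "h > 0" and hH: "h \<le> H" unfolding h_def H_def using hV_pos hV_le_HV t by simp_all
  have D0: "D \<ge> 0" unfolding D_def DaV_frac_energy by (rule integral_nonneg_AE) (simp add: \<Gamma>)
  obtain \<epsilon> where \<epsilon>: "0 < \<epsilon>" "\<epsilon> \<le> 1" "c * \<epsilon> powr \<alpha> * (H/h) \<le> s"
      "1/\<epsilon>^d \<le> 1 + (c*H/(s*h)) powr e"
    using averaging_radius_choice[OF c0 hH h0 s \<alpha>, of d] unfolding e_def by blast
  have "(\<integral>x. indicator (cball 0 t) x * (f x)\<^sup>2 \<partial>muV V)
      \<le> c * \<epsilon> powr \<alpha> * (H / h) * D + k / \<epsilon>^d * (Z * H\<^sup>2 / h) * m\<^sup>2"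
    using local_muV_estimate[OF fm M t \<epsilon>(1,2) _ kint \<Gamma>] \<alpha>
    unfolding c_def k_def d_def H_def h_def D_def m_def by simp
  also have "c * \<epsilon> powr \<alpha> * (H / h) * D \<le> s * D" using \<epsilon>(3) D0 by (rule mult_right_mono)
  also have "k / \<epsilon>^d * (Z * H\<^sup>2 / h) \<le> k * (1 + (c*H/(s*h)) powr e) * (Z * H\<^sup>2 / h)"
  proof (rule mult_right_mono)
    show "k / \<epsilon>^d \<le> k * (1 + (c*H/(s*h)) powr e)"
      using mult_left_mono[OF \<epsilon>(4), of k] k0 by simp
  qed (use Z_pos h0 in simp)
  also have "\<dots> = Z * k * ((H\<^sup>2 / h) * (1 + (c*H/(s*h)) powr e))" by (simp add: field_simps)
  also have "\<dots> \<le> Z * k * ((1 + c powr e) * (H powr (2 + e) * h powr (-1 - e) * (1 + s powr (- e))))"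
    using Z_pos k0 \<alpha> unfolding e_def
    by (intro mult_left_mono mass_coefficient_bound[OF hH h0 s _ c0]) auto
  also have "\<dots> = local_const \<alpha> * beta_weight \<alpha> V t s"
    unfolding local_const_def beta_weight_def H_def h_def e_def c_def k_def d_def
    by (simp add: mult_ac)
  finally show ?thesis unfolding D_def m_def by (simp add: mult_right_mono)
qed

lemma integral_muV_ball_split:
  fixes g :: "'a \<Rightarrow> real"
  assumes [measurable]: "g \<in> borel_measurable borel" and g: "\<And>x. \<bar>g x\<bar> \<le> K"
  shows "(\<integral>x. g x \<partial>muV V)
       = (\<integral>x. indicator (cball 0 t) x * g x \<partial>muV V) + (\<integral>x. indicator (- cball 0 t) x * g x \<partial>muV V)"
proof -
  have [measurable]: "- cball (0::'a) t \<in> sets borel" by (simp add: borel_open)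
  have K0: "K \<ge> 0" using g[of 0] by linarith
  have i1: "integrable (muV V) (\<lambda>x. indicator (cball 0 t) x * g x)"
    by (rule integrable_muV_bounded[where B=K]) (use g K0 in \<open>auto simp: indicator_def\<close>)
  have i2: "integrable (muV V) (\<lambda>x. indicator (- cball 0 t) x * g x)"
    by (rule integrable_muV_bounded[where B=K]) (use g K0 in \<open>auto simp: indicator_def\<close>)
  have "(\<integral>x. g x \<partial>muV V)
      = (\<integral>x. indicator (cball 0 t) x * g x + indicator (- cball 0 t) x * g x \<partial>muV V)"
    by (rule Bochner_Integration.integral_cong) (auto simp: indicator_def)
  also have "\<dots> = (\<integral>x. indicator (cball 0 t) x * g x \<partial>muV V) + (\<integral>x. indicator (- cball 0 t) x * g x \<partial>muV V)"
    using i1 i2 by simp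
  finally show ?thesis .
qed

lemma weighted_tail_bound:
  fixes q \<omega> :: "'a \<Rightarrow> real"
  assumes [measurable]: "q \<in> borel_measurable borel" "\<omega> \<in> borel_measurable borel"
    and q: "\<And>x. 0 \<le> q x" "\<And>x. q x \<le> K"
    and \<omega>_nonneg: "\<And>x. 0 \<le> \<omega> x" and Ot: "Ot > 0" and \<omega>_low: "\<And>x. norm x \<ge> t \<Longrightarrow> Ot \<le> \<omega> x"
    and weighted: "(\<integral>\<^sup>+ x. ennreal (q x * \<omega> x) \<partial>muV V) \<le> ennreal E" and E: "E \<ge> 0"
  shows "(\<integral>x. indicator (- cball 0 t) x * q x \<partial>muV V) \<le> E / Ot"
proof -
  define Bc where "Bc = - cball (0::'a) t"
  have [measurable]: "Bc \<in> sets borel" unfolding Bc_def by (simp add: borel_open)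
  have iq: "integrable (muV V) (\<lambda>x. indicator Bc x * q x)"
    by (rule integrable_muV_bounded[where B=K]) (use q order_trans[OF q] in \<open>auto simp: indicator_def\<close>)
  have pointwise: "indicator Bc x * q x \<le> q x * \<omega> x * (1/Ot)" for x
  proof (cases "x \<in> Bc")
    case True
    then have "1 \<le> \<omega> x / Ot" using \<omega>_low Ot unfolding Bc_def by auto
    then show ?thesis using True q(1)[of x] mult_left_mono[of 1 "\<omega> x / Ot" "q x"] by simp
  qed (use q \<omega>_nonneg Ot in simp)
  have "ennreal (\<integral>x. indicator Bc x * q x \<partial>muV V) = (\<integral>\<^sup>+x. ennreal (indicator Bc x * q x) \<partial>muV V)"
    by (rule nn_integral_eq_integral[OF iq, symmetric]) (auto simp: q)
  also have "\<dots> \<le> (\<integral>\<^sup>+x. ennreal (q x * \<omega> x) * ennreal (1/Ot) \<partial>muV V)"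
    using pointwise q \<omega>_nonneg Ot
    by (intro nn_integral_mono) (simp add: ennreal_mult''[symmetric] ennreal_leI)
  also have "\<dots> = (\<integral>\<^sup>+x. ennreal (q x * \<omega> x) \<partial>muV V) * ennreal (1/Ot)"
    by (rule nn_integral_multc) simp
  also have "\<dots> \<le> ennreal E * ennreal (1/Ot)" using weighted by (rule mult_right_mono) simp
  also have "\<dots> = ennreal (E / Ot)" using E Ot by (simp add: ennreal_mult''[symmetric])
  finally show ?thesis unfolding Bc_def using E Ot by (simp add: ennreal_le_iff)
qed

lemma tail_bound:
  fixes f \<omega> :: "'a \<Rightarrow> real"
  assumes [measurable]: "f \<in> borel_measurable borel" "\<omega> \<in> borel_measurable borel"
    and M: "\<And>y. \<bar>f y\<bar> \<le> M"
    and \<omega>_nonneg: "\<And>x. 0 \<le> \<omega> x" and Ot: "Ot > 0" and \<omega>_low: "\<And>x. norm x \<ge> t \<Longrightarrow> Ot \<le> \<omega> x"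
    and weighted: "(\<integral>\<^sup>+ x. ennreal ((f x - muV_int V f)\<^sup>2 * \<omega> x) \<partial>muV V) \<le> ennreal E" and E: "E \<ge> 0"
  shows "(\<integral>x. indicator (- cball 0 t) x * (f x)\<^sup>2 \<partial>muV V) \<le> 2 * (E / Ot) + 2 * (\<integral>x. \<bar>f x\<bar> \<partial>muV V)\<^sup>2"
proof -
  define m0 where "m0 = muV_int V f"
  define Bc where "Bc = - cball (0::'a) t"
  have [measurable]: "Bc \<in> sets borel" unfolding Bc_def by (simp add: borel_open)
  have q_bdd: "(f x - m0)\<^sup>2 \<le> (M + \<bar>m0\<bar>)\<^sup>2" for x
  proof -
    have "\<bar>f x - m0\<bar> \<le> M + \<bar>m0\<bar>" using M[of x] by linarith
    from power_mono[OF this abs_ge_zero, of 2] show ?thesis by simp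
  qed
  have f2: "\<bar>indicator Bc x * (f x)\<^sup>2\<bar> \<le> M\<^sup>2" for x
    using power_mono[OF M[of x] abs_ge_zero, of 2] by (simp add: indicator_def)
  have iq: "integrable (muV V) (\<lambda>x. indicator Bc x * (f x - m0)\<^sup>2)"
    by (rule integrable_muV_bounded[where B="(M + \<bar>m0\<bar>)\<^sup>2"]) (use q_bdd in \<open>auto simp: indicator_def\<close>)
  have im: "integrable (muV V) (\<lambda>x. indicator Bc x * m0\<^sup>2)"
    by (rule integrable_muV_bounded[where B="m0\<^sup>2"]) (auto simp: indicator_def)
  have "(\<integral>x. indicator Bc x * (f x)\<^sup>2 \<partial>muV V)
      \<le> (\<integral>x. 2 * (indicator Bc x * (f x - m0)\<^sup>2) + 2 * (indicator Bc x * m0\<^sup>2) \<partial>muV V)"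
  proof (rule integral_mono)
    show "integrable (muV V) (\<lambda>x. indicator Bc x * (f x)\<^sup>2)"
      by (rule integrable_muV_bounded[where B="M\<^sup>2"]) (use f2 in auto)
    show "integrable (muV V) (\<lambda>x. 2 * (indicator Bc x * (f x - m0)\<^sup>2) + 2 * (indicator Bc x * m0\<^sup>2))"
      using iq im by simp
    fix x
    have "(f x)\<^sup>2 \<le> 2 * (f x - m0)\<^sup>2 + 2 * m0\<^sup>2"
      using sum_squares_ge_zero[of "f x - 2*m0" 0] by (simp add: power2_eq_square algebra_simps)
    then show "indicator Bc x * (f x)\<^sup>2 \<le> 2 * (indicator Bc x * (f x - m0)\<^sup>2) + 2 * (indicator Bc x * m0\<^sup>2)"
      by (simp add: indicator_def)
  qed
  also have "\<dots> = 2 * (\<integral>x. indicator Bc x * (f x - m0)\<^sup>2 \<partial>muV V) + 2 * (\<integral>x. indicator Bc x * m0\<^sup>2 \<partial>muV V)"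
    using iq im by simp
  also have "(\<integral>x. indicator Bc x * (f x - m0)\<^sup>2 \<partial>muV V) \<le> E / Ot"
    unfolding Bc_def
    by (rule weighted_tail_bound[OF _ _ _ q_bdd \<omega>_nonneg Ot \<omega>_low _ E]) (use weighted in \<open>simp_all add: m0_def\<close>)
  also have "(\<integral>x. indicator Bc x * m0\<^sup>2 \<partial>muV V) \<le> m0\<^sup>2"
    using muV_set_integral_const_le[of Bc "m0\<^sup>2"] by simp
  also have "m0\<^sup>2 \<le> (\<integral>x. \<bar>f x\<bar> \<partial>muV V)\<^sup>2"
  proof -
    have "\<bar>m0\<bar> \<le> (\<integral>x. \<bar>f x\<bar> \<partial>muV V)" unfolding m0_def muV_int_def by (rule integral_abs_bound)
    from power_mono[OF this abs_ge_zero, of 2] show ?thesis by simp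
  qed
  finally show ?thesis unfolding Bc_def by simp
qed

lemma super_poincare_fixed_scale:
  fixes f \<omega> :: "'a \<Rightarrow> real"
  assumes Cb: "Cb_inf f" and \<alpha>: "0 < \<alpha>" "\<alpha> < 2" and \<omega>: "growing_weight \<omega>" and C0: "C0 > 0"
    and weighted: "(\<integral>\<^sup>+ x. ennreal ((f x - muV_int V f)\<^sup>2 * \<omega> x) \<partial>muV V) \<le> ennreal (C0 * DaV \<alpha> V f)"
    and t: "t > 1" and s: "s > 0" and admissible: "2 * C0 / omega_inf \<omega> t + s \<le> r"
  shows "muV_int V (\<lambda>x. (f x)\<^sup>2) \<le> r * DaV \<alpha> V f
     + (local_const \<alpha> + 2 / exp (V 0)) * beta_weight \<alpha> V t s * (muV_int V (\<lambda>x. \<bar>f x\<bar>))\<^sup>2"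
proof -
  interpret growing_weight \<omega> by (rule \<omega>)
  obtain M L where M: "\<And>x. \<bar>f x\<bar> \<le> M" and Lip: "\<And>x y. \<bar>f x - f y\<bar> \<le> L * norm (x - y)"
    and fc: "continuous_on UNIV f"
    using Cb_inf_bounded_Lipschitz[OF Cb] by blast
  have fm[measurable]: "f \<in> borel_measurable borel" using fc by (rule borel_measurable_continuous_onI)
  have [measurable]: "\<omega> \<in> borel_measurable borel" using \<omega>_cont by (rule borel_measurable_continuous_onI)
  obtain K where kint: "\<And>x. integrable lborel (\<lambda>y. (f y - f x)\<^sup>2 / norm (y - x) powr (real DIM('a) + \<alpha>))"
    and \<Gamma>: "\<And>x. 0 \<le> frac_energy \<alpha> f x" "\<And>x. frac_energy \<alpha> f x \<le> K"
    using frac_energy_bounded[OF fm M Lip \<alpha>] by blast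
  define D where "D = DaV \<alpha> V f"
  define m where "m = muV_int V (\<lambda>x. \<bar>f x\<bar>)"
  define W where "W = beta_weight \<alpha> V t s"
  define Ot where "Ot = omega_inf \<omega> t"
  have D0: "D \<ge> 0" unfolding D_def DaV_frac_energy by (rule integral_nonneg_AE) (simp add: \<Gamma>)
  have Ot0: "Ot > 0" unfolding Ot_def by (rule omega_inf_pos)
  have f2: "\<bar>(f x)\<^sup>2\<bar> \<le> M\<^sup>2" for x using power_mono[OF M[of x] abs_ge_zero, of 2] by simp
  have "muV_int V (\<lambda>x. (f x)\<^sup>2)
      = (\<integral>x. indicator (cball 0 t) x * (f x)\<^sup>2 \<partial>muV V) + (\<integral>x. indicator (- cball 0 t) x * (f x)\<^sup>2 \<partial>muV V)"
    unfolding muV_int_def by (rule integral_muV_ball_split[OF _ f2]) simp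
  also have "(\<integral>x. indicator (cball 0 t) x * (f x)\<^sup>2 \<partial>muV V) \<le> s * D + local_const \<alpha> * W * m\<^sup>2"
    unfolding D_def W_def m_def muV_int_def by (rule local_part_bound[OF fm M t s \<alpha>(1) kint \<Gamma>])
  also have "(\<integral>x. indicator (- cball 0 t) x * (f x)\<^sup>2 \<partial>muV V) \<le> 2 * (C0 * D / Ot) + 2 * m\<^sup>2"
    unfolding m_def muV_int_def
    by (rule tail_bound[OF fm _ M _ Ot0 _ weighted[folded D_def]])
      (use \<omega>_pos C0 D0 in \<open>auto simp: Ot_def less_imp_le omega_inf_le\<close>)
  also have "2 * m\<^sup>2 \<le> (2 / exp (V 0)) * W * m\<^sup>2"
    using beta_weight_ge[of t \<alpha> s] t \<alpha> unfolding W_def by (intro mult_right_mono) (auto simp: field_simps)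
  also have "s * D + 2 * (C0 * D / Ot) \<le> r * D"
    using admissible D0 mult_right_mono[of "s + 2 * C0 / Ot" r D] unfolding Ot_def by (simp add: algebra_simps)
  ultimately show ?thesis unfolding D_def W_def m_def by (simp add: algebra_simps)
qed

end

lemma le_add_Inf_mult:
  fixes S :: "real set" and a b m :: real
  assumes S: "S \<noteq> {}" and m: "m \<ge> 0" and each: "\<And>y. y \<in> S \<Longrightarrow> a \<le> b + y * m"
  shows "a \<le> b + Inf S * m"
proof (cases "m = 0")
  case True
  obtain y where "y \<in> S" using S by blast
  then show ?thesis using each True by simp
next
  case False
  then have "(a - b) / m \<le> Inf S"
    using m each by (intro cInf_greatest[OF S]) (auto simp: field_simps)
  then show ?thesis using False m by (simp add: field_simps)
qed

lemma beta_fun_eq: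
  "beta_fun \<alpha> V \<omega> C0 C1 r
     = Inf {C1 * beta_weight \<alpha> V t s | t s. 2 * C0 / omega_inf \<omega> t + s \<le> r \<and> t > 1 \<and> s > 0}"
  unfolding beta_fun_def beta_weight_def by (simp add: mult.assoc)

lemma half_scale_factor_bound:
  fixes P r r0 e :: real
  assumes r: "0 < r" "r \<le> r0" and e: "e \<ge> 0" and P: "P \<ge> 0"
  shows "P * (1 + (r/2) powr (- e)) \<le> (r0 powr e + 2 powr e) * (r powr (- e) * P)"
proof -
  have "1 \<le> r0 powr e * r powr (- e)"
  proof -
    have "r0 powr (- e) \<le> r powr (- e)" using r e by (intro powr_mono2') auto
    then show ?thesis using r by (simp add: powr_minus_divide field_simps)
  qed
  then have "P * 1 \<le> P * (r0 powr e * r powr (- e))" using P by (rule mult_left_mono)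
  then have "P \<le> r0 powr e * (r powr (- e) * P)" by (simp add: mult_ac)
  moreover have "(r/2) powr (- e) = 2 powr e * r powr (- e)"
    using r by (simp add: powr_divide powr_minus_divide)
  ultimately show ?thesis by (simp add: algebra_simps)
qed

context growing_weight
begin

lemma kappa_admissible:
  assumes r: "r > 0" and C0: "C0 > 0" and t: "t \<ge> kappa \<omega> (4 * C0 / r)"
  shows "2 * C0 / omega_inf \<omega> t + r / 2 \<le> r"
proof -
  have "4 * C0 / r \<le> omega_inf \<omega> t"
    using omega_inf_kappa omega_inf_mono[OF t] by (rule order_trans)
  then have "2 * C0 / omega_inf \<omega> t \<le> 2 * C0 / (4 * C0 / r)"
    using C0 r omega_inf_pos[of t] by (intro divide_left_mono) auto
  also have "\<dots> = r / 2" using C0 by simp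
  finally show ?thesis by simp
qed

lemma admissible_nonempty:
  assumes r: "r > 0" and C0: "C0 > 0"
  shows "{C1 * beta_weight \<alpha> V t s | t s. 2 * C0 / omega_inf \<omega> t + s \<le> r \<and> t > 1 \<and> s > 0} \<noteq> {}"
  using kappa_admissible[OF r C0, of "max (kappa \<omega> (4 * C0 / r)) 2"] r by fastforce

text \<open>The explicit upper bound for \<open>\<beta>(r)\<close> at small scales: for \<open>r \<le> r\<^sub>0\<close> the radius
  \<open>\<kappa>(4 C\<^sub>0/r)\<close> exceeds 1, so \<open>(\<kappa>(4 C\<^sub>0/r), r/2)\<close> is an admissible pair.\<close>
lemma beta_fun_small_scale:
  fixes V :: "'a \<Rightarrow> real"
  assumes C0: "C0 > 0" and C1: "C1 > 0" and \<alpha>: "\<alpha> > 0"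
  shows "\<exists>r0>0. \<exists>C2>0. \<forall>r. 0 < r \<and> r \<le> r0 \<longrightarrow>
        beta_fun \<alpha> V \<omega> C0 C1 r \<le> C2 * (1 + r powr (- real DIM('a) / \<alpha>)
          * hV V (kappa \<omega> (4 * C0 / r)) powr (-1 - real DIM('a) / \<alpha>)
          * HV V (kappa \<omega> (4 * C0 / r)) powr (2 + real DIM('a) / \<alpha>))"
proof -
  define e where "e = real DIM('a) / \<alpha>"
  define S where "S r = {C1 * beta_weight \<alpha> V t s | t s. 2 * C0 / omega_inf \<omega> t + s \<le> r \<and> t > 1 \<and> s > 0}" for r
  define r0 where "r0 = 4 * C0 / (omega_inf \<omega> 1 + 1)"
  define C2 where "C2 = C1 * (r0 powr e + 2 powr e)"
  have r0: "r0 > 0" unfolding r0_def using C0 omega_inf_pos[of 1] by simp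
  have C2: "C2 > 0" unfolding C2_def using C1 by (intro mult_pos_pos add_nonneg_pos) auto
  have "beta_fun \<alpha> V \<omega> C0 C1 r \<le> C2 * (1 + r powr (- e)
          * hV V (kappa \<omega> (4 * C0 / r)) powr (-1 - e) * HV V (kappa \<omega> (4 * C0 / r)) powr (2 + e))"
    if r: "0 < r" "r \<le> r0" for r
  proof -
    define \<kappa> where "\<kappa> = kappa \<omega> (4 * C0 / r)"
    define P where "P = HV V \<kappa> powr (2 + e) * hV V \<kappa> powr (-1 - e)"
    have "omega_inf \<omega> 1 + 1 \<le> 4 * C0 / r"
    proof -
      have "4 * C0 / r0 \<le> 4 * C0 / r" using r C0 by (intro divide_left_mono) auto
      then show ?thesis unfolding r0_def using C0 omega_inf_pos[of 1] by simp
    qed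
    then have "\<kappa> > 1"
      using omega_inf_kappa[of "4 * C0 / r"] omega_inf_mono[of \<kappa> 1] unfolding \<kappa>_def by force
    moreover have "2 * C0 / omega_inf \<omega> \<kappa> + r / 2 \<le> r"
      unfolding \<kappa>_def by (rule kappa_admissible[OF r(1) C0]) simp
    ultimately have "C1 * beta_weight \<alpha> V \<kappa> (r/2) \<in> S r" unfolding S_def using r by fastforce
    moreover have "bdd_below (S r)"
      unfolding S_def using C1 by (intro bdd_belowI[where m=0]) (auto simp: beta_weight_nonneg)
    ultimately have "beta_fun \<alpha> V \<omega> C0 C1 r \<le> C1 * (P * (1 + (r/2) powr (- e)))"
      unfolding beta_fun_eq S_def[symmetric] by (auto intro: cInf_lower simp: beta_weight_def P_def e_def)
    also have "\<dots> \<le> C1 * ((r0 powr e + 2 powr e) * (r powr (- e) * P))"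
      using C1 r \<alpha> unfolding e_def by (intro mult_left_mono half_scale_factor_bound) (auto simp: P_def)
    also have "\<dots> \<le> C2 * (1 + r powr (- e) * P)"
      using C2 mult_left_mono[of "r powr (- e) * P" "1 + r powr (- e) * P" C2]
      unfolding C2_def by (simp add: mult.assoc)
    finally show ?thesis unfolding P_def \<kappa>_def by (simp add: mult_ac)
  qed
  moreover have "- real DIM('a) / \<alpha> = - e" unfolding e_def by simp
  ultimately show ?thesis unfolding e_def[symmetric] using r0 C2 by (intro exI[of _ r0] exI[of _ C2]) auto
qed

end

context gibbs_potential
begin

lemma super_poincare:
  fixes f \<omega> :: "'a \<Rightarrow> real"
  assumes Cb: "Cb_inf f" and \<alpha>: "0 < \<alpha>" "\<alpha> < 2" and \<omega>: "growing_weight \<omega>" and C0: "C0 > 0"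
    and weighted: "(\<integral>\<^sup>+ x. ennreal ((f x - muV_int V f)\<^sup>2 * \<omega> x) \<partial>muV V) \<le> ennreal (C0 * DaV \<alpha> V f)"
    and r: "r > 0"
  shows "muV_int V (\<lambda>x. (f x)\<^sup>2) \<le> r * DaV \<alpha> V f
     + beta_fun \<alpha> V \<omega> C0 (local_const \<alpha> + 2 / exp (V 0)) r * (muV_int V (\<lambda>x. \<bar>f x\<bar>))\<^sup>2"
  unfolding beta_fun_eq
proof (rule le_add_Inf_mult[OF growing_weight.admissible_nonempty[OF \<omega> r C0]])
  fix y
  assume "y \<in> {(local_const \<alpha> + 2 / exp (V 0)) * beta_weight \<alpha> V t s |t s.
      2 * C0 / omega_inf \<omega> t + s \<le> r \<and> 1 < t \<and> 0 < s}"
  then obtain t s where y: "y = (local_const \<alpha> + 2 / exp (V 0)) * beta_weight \<alpha> V t s"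
    and ts: "2 * C0 / omega_inf \<omega> t + s \<le> r" "t > 1" "s > 0" by blast
  show "muV_int V (\<lambda>x. (f x)\<^sup>2) \<le> r * DaV \<alpha> V f + y * (muV_int V (\<lambda>x. \<bar>f x\<bar>))\<^sup>2"
    unfolding y by (rule super_poincare_fixed_scale[OF Cb \<alpha> \<omega> C0 weighted ts(2,3,1)])
qed simp

end

theorem proposition1p6:
  fixes V :: "'a::euclidean_space \<Rightarrow> real" and \<omega> :: "'a \<Rightarrow> real"
    and \<alpha> C0 :: real
  assumes V_meas: "V \<in> borel_measurable borel"
    and V_locbdd: "\<And>K. compact K \<Longrightarrow> bounded (V ` K)"
    and expV_bdd: "bounded (range (\<lambda>x. exp (- V x)))"
    and expV_int: "integrable lborel (\<lambda>x. exp (- V x))"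
    and \<alpha>: "0 < \<alpha>" "\<alpha> < 2"
    and \<omega>_pos: "\<And>x. \<omega> x > 0"
    and \<omega>_cont: "continuous_on UNIV \<omega>"
    and \<omega>_lim: "filterlim \<omega> at_top at_infinity"
    and C0: "C0 > 0"
    and weighted_poincare: "\<And>f. Cb_inf f \<Longrightarrow>
        (\<integral>\<^sup>+ x. ennreal ((f x - muV_int V f)\<^sup>2 * \<omega> x) \<partial>muV V) \<le> ennreal (C0 * DaV \<alpha> V f)"
  shows "\<exists>C1>0.
     (\<forall>r>0. \<forall>f. Cb_inf f \<longrightarrow>
        muV_int V (\<lambda>x. (f x)\<^sup>2) \<le> r * DaV \<alpha> V f + beta_fun \<alpha> V \<omega> C0 C1 r * (muV_int V (\<lambda>x. \<bar>f x\<bar>))\<^sup>2)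
   \<and> (\<exists>r0>0. \<exists>C2>0. \<forall>r. 0 < r \<and> r \<le> r0 \<longrightarrow>
        beta_fun \<alpha> V \<omega> C0 C1 r \<le> C2 * (1 + r powr (- real DIM('a) / \<alpha>)
          * hV V (kappa \<omega> (4 * C0 / r)) powr (-1 - real DIM('a) / \<alpha>)
          * HV V (kappa \<omega> (4 * C0 / r)) powr (2 + real DIM('a) / \<alpha>)))"
proof -
  interpret gibbs_potential V by unfold_locales (fact V_meas V_locbdd expV_int)+
  have \<omega>: "growing_weight \<omega>" by unfold_locales (fact \<omega>_pos \<omega>_cont \<omega>_lim)+
  define C1 where "C1 = local_const \<alpha> + 2 / exp (V 0)"
  have C1: "C1 > 0" unfolding C1_def using local_const_pos by (simp add: add_pos_pos)
  have "muV_int V (\<lambda>x. (f x)\<^sup>2) \<le> r * DaV \<alpha> V f + beta_fun \<alpha> V \<omega> C0 C1 r * (muV_int V (\<lambda>x. \<bar>f x\<bar>))\<^sup>2"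
    if "r > 0" "Cb_inf f" for r f
    unfolding C1_def using super_poincare[OF that(2) \<alpha> \<omega> C0 weighted_poincare[OF that(2)] that(1)] .
  moreover have "\<exists>r0>0. \<exists>C2>0. \<forall>r. 0 < r \<and> r \<le> r0 \<longrightarrow>
        beta_fun \<alpha> V \<omega> C0 C1 r \<le> C2 * (1 + r powr (- real DIM('a) / \<alpha>)
          * hV V (kappa \<omega> (4 * C0 / r)) powr (-1 - real DIM('a) / \<alpha>)
          * HV V (kappa \<omega> (4 * C0 / r)) powr (2 + real DIM('a) / \<alpha>))"
    by (rule growing_weight.beta_fun_small_scale[OF \<omega> C0 C1 \<alpha>(1)])
  ultimately show ?thesis using C1 by blast
qed

end
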